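(* A shift space $X$ is eventually dendric if and only if (1) the sequence $(s_n(X))_n$ is eventually constant, and (2) $\lim_{n\to\infty} s_n(X)=\omega(X)$.
   Context: $A$ is a finite alphabet; a shift space is a closed shift-invariant subset $X\subseteq A^{\mathbb Z}$; $\mathcal L(X)$ is its set of finite factors, $\mathcal L_n(X)=\mathcal L(X)\cap A^n$, $\mathcal L_{\ge n}(X)=\bigcup_{k\ge n}\mathcal L_k(X)$, $p_n(X)=\mathrm{Card}\,\mathcal L_n(X)$, $s_n(X)=p_{n+1}(X)-p_n(X)$. For $w\in\mathcal L(X)$, the extension graph $\mathcal E_1(w)$ is the undirected bipartite graph with vertex set the disjoint union of $\{a\in A: aw\in\mathcal L(X)\}$ and $\{b\in A: wb\in\mathcal L(X)\}$, and an edge $(a,b)$ iff $awb\in\mathcal L(X)$. $X$ is eventually dendric (with threshold $m$) if $\mathcal E_1(w)$ is a tree for every $w\in\mathcal L_{\ge m}(X)$, for some $m\ge0$. For $x\in A^{\mathbb Z}$, $x^+=x_0x_1\cdots$. Two elements $x,y\in X$ are right asymptotically equivalent if some shifts $\sigma^i(x),\sigma^j(y)$ satisfy $\sigma^i(x)^+=\sigma^j(y)^+$; a right asymptotic class is an equivalence class containing more than one orbit. For such a class $C$, $\omega(C)$ is the number of orbits contained in $C$ minus one, and $\omega(X)=\sum_C\omega(C)$, the sum over all right asymptotic classes $C$ of $X$. *)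

theory Defs
  imports "HOL-Analysis.Analysis"
begin

definition shift :: "(int \<Rightarrow> 'a) \<Rightarrow> (int \<Rightarrow> 'a)" where
  "shift x = (\<lambda>i. x (i + 1))"

definition is_shift_space :: "(int \<Rightarrow> 'a::finite) set \<Rightarrow> bool" where
  "is_shift_space X \<longleftrightarrow>
     closedin (product_topology (\<lambda>_::int. discrete_topology (UNIV::'a set)) UNIV) X
     \<and> shift ` X = X"

definition factor_at :: "(int \<Rightarrow> 'a) \<Rightarrow> int \<Rightarrow> nat \<Rightarrow> 'a list" where
  "factor_at x i n = map (\<lambda>k. x (i + int k)) [0..<n]"

definition lang :: "(int \<Rightarrow> 'a) set \<Rightarrow> 'a list set" where
  "lang X = {w. \<exists>x\<in>X. \<exists>i. w = factor_at x i (length w)}"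

definition lang_n :: "(int \<Rightarrow> 'a) set \<Rightarrow> nat \<Rightarrow> 'a list set" where
  "lang_n X n = {w \<in> lang X. length w = n}"

definition p_cplx :: "(int \<Rightarrow> 'a) set \<Rightarrow> nat \<Rightarrow> nat" where
  "p_cplx X n = card (lang_n X n)"

definition s_cplx :: "(int \<Rightarrow> 'a) set \<Rightarrow> nat \<Rightarrow> int" where
  "s_cplx X n = int (p_cplx X (Suc n)) - int (p_cplx X n)"

definition is_cycle :: "'v set \<Rightarrow> ('v \<Rightarrow> 'v \<Rightarrow> bool) \<Rightarrow> 'v list \<Rightarrow> bool" where
  "is_cycle V E cs \<longleftrightarrow> length cs \<ge> 3 \<and> distinct cs \<and> set cs \<subseteq> V
     \<and> (\<forall>i. Suc i < length cs \<longrightarrow> E (cs ! i) (cs ! Suc i))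
     \<and> E (last cs) (hd cs)"

definition is_tree :: "'v set \<Rightarrow> ('v \<Rightarrow> 'v \<Rightarrow> bool) \<Rightarrow> bool" where
  "is_tree V E \<longleftrightarrow> V \<noteq> {}
     \<and> (\<forall>u\<in>V. \<forall>v\<in>V. (\<lambda>a b. a \<in> V \<and> b \<in> V \<and> E a b)\<^sup>*\<^sup>* u v)
     \<and> (\<nexists>cs. is_cycle V E cs)"

text \<open>Extension graph E_1(w): bipartite on left extensions (Inl) and right extensions (Inr).\<close>

definition left_ext :: "(int \<Rightarrow> 'a) set \<Rightarrow> 'a list \<Rightarrow> 'a set" where
  "left_ext X w = {a. a # w \<in> lang X}"

definition right_ext :: "(int \<Rightarrow> 'a) set \<Rightarrow> 'a list \<Rightarrow> 'a set" where
  "right_ext X w = {b. w @ [b] \<in> lang X}"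

definition ext_vertices :: "(int \<Rightarrow> 'a) set \<Rightarrow> 'a list \<Rightarrow> ('a + 'a) set" where
  "ext_vertices X w = Inl ` left_ext X w \<union> Inr ` right_ext X w"

fun ext_adj :: "(int \<Rightarrow> 'a) set \<Rightarrow> 'a list \<Rightarrow> ('a + 'a) \<Rightarrow> ('a + 'a) \<Rightarrow> bool" where
  "ext_adj X w (Inl a) (Inr b) = (a # w @ [b] \<in> lang X)"
| "ext_adj X w (Inr b) (Inl a) = (a # w @ [b] \<in> lang X)"
| "ext_adj X w _ _ = False"

definition eventually_dendric :: "(int \<Rightarrow> 'a) set \<Rightarrow> bool" where
  "eventually_dendric X \<longleftrightarrow>
     (\<exists>m. \<forall>w\<in>lang X. length w \<ge> m \<longrightarrow> is_tree (ext_vertices X w) (ext_adj X w))"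

definition right_asym :: "(int \<Rightarrow> 'a) \<Rightarrow> (int \<Rightarrow> 'a) \<Rightarrow> bool" where
  "right_asym x y \<longleftrightarrow> (\<exists>i j. \<forall>k::nat. x (i + int k) = y (j + int k))"

definition orbit :: "(int \<Rightarrow> 'a) \<Rightarrow> (int \<Rightarrow> 'a) set" where
  "orbit x = {(\<lambda>k. x (k + n)) | n::int. True}"

definition asym_eqclass :: "(int \<Rightarrow> 'a) set \<Rightarrow> (int \<Rightarrow> 'a) \<Rightarrow> (int \<Rightarrow> 'a) set" where
  "asym_eqclass X x = {y \<in> X. right_asym x y}"

definition orbits_in :: "(int \<Rightarrow> 'a) set \<Rightarrow> (int \<Rightarrow> 'a) set set" where
  "orbits_in C = orbit ` C"

definition asym_classes :: "(int \<Rightarrow> 'a) set \<Rightarrow> (int \<Rightarrow> 'a) set set" where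
  "asym_classes X = {C. \<exists>x\<in>X. C = asym_eqclass X x
       \<and> (\<exists>y\<in>C. \<exists>z\<in>C. orbit y \<noteq> orbit z)}"

definition omega :: "(int \<Rightarrow> 'a) set \<Rightarrow> enat" where
  "omega X = (if finite (asym_classes X) \<and> (\<forall>C\<in>asym_classes X. finite (orbits_in C))
              then enat (\<Sum>C\<in>asym_classes X. card (orbits_in C) - 1)
              else \<infinity>)"

end

theory Submission
  imports Defs
begin

text \<open>Write L(w) for the left extensions of a word w, so that s_n is the sum of |L(w)| - 1 over the
  words of length n. Call a right-infinite word whose prefixes all lie in the language a ray, and a
  ray with at least two left extensions left special, of multiplicity |L(u)| - 1. When s is
  eventually constant there are only finitely many left special rays, and for large n, s_n is
  their total multiplicity plus the contribution of the left special words of length n that are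
  not prefixes of left special rays.

  If all long extension graphs are trees, counting edges gives s_(n+1) = s_n and shows that a left
  special word passes its multiplicity on to its right extensions, so by Koenig's lemma every long
  left special word is a prefix of a left special ray. Conversely, if s_n equals the total
  multiplicity, every long left special word is such a prefix, and its extension graph is then a
  star, hence a tree. Finally, counting the orbits in each right asymptotic class shows that
  \<omega>(X) equals the total multiplicity as well.\<close>

section \<open>Languages of shift spaces\<close>

definition shift_by :: "int \<Rightarrow> (int \<Rightarrow> 'a) \<Rightarrow> int \<Rightarrow> 'a" where
  "shift_by n x = (\<lambda>k. x (k + n))"

lemma length_factor_at[simp]: "length (factor_at x i n) = n"
  by (simp add: factor_at_def)

lemma nth_factor_at[simp]: "k < n \<Longrightarrow> factor_at x i n ! k = x (i + int k)"
  by (simp add: factor_at_def)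

lemma factor_at_add: "factor_at x i (m + k) = factor_at x i m @ factor_at x (i + int m) k"
  by (rule nth_equalityI) (auto simp: nth_append algebra_simps)

lemma factor_at_Suc_left: "factor_at x (i - 1) (Suc n) = x (i - 1) # factor_at x i n"
  by (rule nth_equalityI) (auto simp: nth_Cons' algebra_simps)

lemma factor_at_Suc_right: "factor_at x i (Suc n) = factor_at x i n @ [x (i + int n)]"
  using factor_at_add[of x i n 1] by (simp add: factor_at_def)

lemma shift_by_shift_by[simp]: "shift_by m (shift_by n x) = shift_by (n + m) x"
  by (simp add: shift_by_def algebra_simps)

lemma shift_by_0[simp]: "shift_by 0 x = x"
  by (simp add: shift_by_def)

lemma shift_by_mem:
  assumes ss: "is_shift_space X" and x: "x \<in> X"
  shows "shift_by n x \<in> X"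
proof (induction n rule: int_induct[where k = 0])
  case base
  then show ?case using x by simp
next
  case (step1 i)
  then have "shift (shift_by i x) \<in> X" using ss by (auto simp: is_shift_space_def)
  then show ?case by (simp add: shift_def shift_by_def algebra_simps)
next
  case (step2 i)
  then have "shift_by i x \<in> shift ` X" using ss by (simp add: is_shift_space_def)
  then obtain z where z: "z \<in> X" "shift_by i x = shift z" by blast
  have "z k = shift_by (i - 1) x k" for k
    using fun_cong[OF z(2), of "k - 1"] by (simp add: shift_def shift_by_def algebra_simps)
  then show ?case using z(1) by (metis ext)
qed

lemma lang_factor: "x \<in> X \<Longrightarrow> factor_at x i n \<in> lang X"
  by (auto simp: lang_def)

lemma lang_infix:
  assumes "u @ v @ w \<in> lang X"
  shows "v \<in> lang X"
proof -
  obtain x i where x: "x \<in> X" and e: "u @ v @ w = factor_at x i (length (u @ v @ w))"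
    using assms by (auto simp: lang_def)
  have "factor_at x i (length (u @ v @ w)) = factor_at x i (length u) @ factor_at x (i + int (length u)) (length v)
       @ factor_at x (i + int (length u) + int (length v)) (length w)"
    by (simp add: factor_at_add add.assoc)
  with e have "u @ (v @ w) = factor_at x i (length u) @ (factor_at x (i + int (length u)) (length v)
       @ factor_at x (i + int (length u) + int (length v)) (length w))" by simp
  hence "v @ w = factor_at x (i + int (length u)) (length v)
       @ factor_at x (i + int (length u) + int (length v)) (length w)"
    by (subst (asm) append_eq_append_conv) auto
  hence "v = factor_at x (i + int (length u)) (length v)"
    by (subst (asm) append_eq_append_conv) auto
  thus ?thesis using x by (auto simp: lang_def)
qed

lemma lang_prefix: "u @ v \<in> lang X \<Longrightarrow> u \<in> lang X"
  using lang_infix[of "[]" u v] by simp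

lemma lang_suffix: "u @ v \<in> lang X \<Longrightarrow> v \<in> lang X"
  using lang_infix[of u v "[]"] by simp

lemma lang_take: "w \<in> lang X \<Longrightarrow> take n w \<in> lang X"
  by (metis append_take_drop_id lang_prefix)

lemma lang_drop: "w \<in> lang X \<Longrightarrow> drop n w \<in> lang X"
  by (metis append_take_drop_id lang_suffix)

lemma lang_ext_left:
  assumes "w \<in> lang X" shows "\<exists>a. a # w \<in> lang X"
proof -
  obtain x i where x: "x \<in> X" and e: "w = factor_at x i (length w)"
    using assms by (auto simp: lang_def)
  have "x (i - 1) # w = factor_at x (i - 1) (length (x (i - 1) # w))"
    using e factor_at_Suc_left[of x i "length w"] by simp
  thus ?thesis using x by (auto simp: lang_def)
qed

lemma lang_ext_right:
  assumes "w \<in> lang X" shows "\<exists>b. w @ [b] \<in> lang X"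
proof -
  obtain x i where x: "x \<in> X" and e: "w = factor_at x i (length w)"
    using assms by (auto simp: lang_def)
  have "w @ [x (i + int (length w))] = factor_at x i (length (w @ [x (i + int (length w))]))"
    using e factor_at_Suc_right[of x i "length w"] by simp
  thus ?thesis using x by (auto simp: lang_def)
qed

lemma finite_lang_n: "finite (lang_n X (n::nat) :: ('a::finite) list set)"
proof -
  have "lang_n X n \<subseteq> {xs. set xs \<subseteq> UNIV \<and> length xs = n}" by (auto simp: lang_n_def)
  moreover have "finite {xs. set xs \<subseteq> (UNIV::'a set) \<and> length xs = n}"
    by (rule finite_lists_length_eq) simp
  ultimately show ?thesis by (rule finite_subset)
qed

lemma mem_shift_space_if_approximable:
  fixes X :: "(int \<Rightarrow> 'a::finite) set"
  assumes ss: "is_shift_space X" and approx: "\<And>n. \<exists>y\<in>X. \<forall>i. \<bar>i\<bar> \<le> int n \<longrightarrow> y i = g i"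
  shows "g \<in> X"
proof (rule ccontr)
  assume gX: "g \<notin> X"
  let ?T = "product_topology (\<lambda>_::int. discrete_topology (UNIV::'a set)) UNIV"
  have "closedin ?T X" using ss by (simp add: is_shift_space_def)
  then have "openin ?T (topspace ?T - X)" by (simp add: closedin_def)
  moreover have "g \<in> topspace ?T - X" using gX by simp
  ultimately obtain U where Uf: "finite {i. U i \<noteq> UNIV}" and gU: "g \<in> PiE UNIV U"
      and sub: "PiE UNIV U \<subseteq> topspace ?T - X"
    unfolding openin_product_topology_alt by auto (meson Diff_iff UNIV_I gX)
  define n where "n = nat (\<Sum>i\<in>{i. U i \<noteq> UNIV}. \<bar>i\<bar>)"
  have window: "\<bar>i\<bar> \<le> int n" if "U i \<noteq> UNIV" for i
  proof -
    have "\<bar>i\<bar> \<le> (\<Sum>i\<in>{i. U i \<noteq> UNIV}. \<bar>i\<bar>)" using Uf that by (intro member_le_sum) auto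
    then show ?thesis by (simp add: n_def)
  qed
  obtain y where y: "y \<in> X" "\<And>i. \<bar>i\<bar> \<le> int n \<Longrightarrow> y i = g i" using approx by blast
  have "y i \<in> U i" for i
  proof (cases "U i = UNIV")
    case False
    then show ?thesis using y(2)[OF window[OF False]] gU by (auto simp: PiE_def Pi_def)
  qed simp
  then have "y \<in> PiE UNIV U" by (auto simp: PiE_def Pi_def)
  with sub y(1) show False by auto
qed

lemma mem_if_factors_in_lang:
  fixes X :: "(int \<Rightarrow> 'a::finite) set"
  assumes ss: "is_shift_space X" and g: "\<And>i n. factor_at g i n \<in> lang X"
  shows "g \<in> X"
proof (rule mem_shift_space_if_approximable[OF ss])
  fix n
  obtain x j where x: "x \<in> X" and eq: "factor_at g (- int n) (2*n+1) = factor_at x j (2*n+1)"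
    using g[of "- int n" "2*n+1"] by (auto simp: lang_def)
  have "shift_by (j + int n) x i = g i" if "\<bar>i\<bar> \<le> int n" for i
  proof -
    define k where "k = nat (i + int n)"
    have k: "k < 2*n+1" "int k = i + int n" using that by (auto simp: k_def)
    have "factor_at g (-int n) (2*n+1) ! k = factor_at x j (2*n+1) ! k" using eq by simp
    then have "g (- int n + int k) = x (j + int k)" using k by simp
    then show ?thesis using k by (simp add: shift_by_def algebra_simps)
  qed
  then show "\<exists>y\<in>X. \<forall>i. \<bar>i\<bar> \<le> int n \<longrightarrow> y i = g i" using shift_by_mem[OF ss x] by blast
qed

section \<open>Rays and left special rays\<close>

definition seq_prefix :: "nat \<Rightarrow> (nat \<Rightarrow> 'a) \<Rightarrow> 'a list" where
  "seq_prefix n u = map u [0..<n]"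

definition seq_cons :: "'a \<Rightarrow> (nat \<Rightarrow> 'a) \<Rightarrow> nat \<Rightarrow> 'a" where
  "seq_cons a u = (\<lambda>k. case k of 0 \<Rightarrow> a | Suc j \<Rightarrow> u j)"

definition seq_drop :: "nat \<Rightarrow> (nat \<Rightarrow> 'a) \<Rightarrow> nat \<Rightarrow> 'a" where
  "seq_drop j u = (\<lambda>k. u (k + j))"

definition ray :: "(int \<Rightarrow> 'a) \<Rightarrow> int \<Rightarrow> nat \<Rightarrow> 'a" where
  "ray x t = (\<lambda>k. x (t + int k))"

definition is_ray :: "(int \<Rightarrow> 'a) set \<Rightarrow> (nat \<Rightarrow> 'a) \<Rightarrow> bool" where
  "is_ray X u \<longleftrightarrow> (\<forall>n. seq_prefix n u \<in> lang X)"

definition ray_left_ext :: "(int \<Rightarrow> 'a) set \<Rightarrow> (nat \<Rightarrow> 'a) \<Rightarrow> 'a set" where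
  "ray_left_ext X u = {a. \<forall>n. a # seq_prefix n u \<in> lang X}"

definition special_rays :: "(int \<Rightarrow> 'a) set \<Rightarrow> (nat \<Rightarrow> 'a) set" where
  "special_rays X = {u. is_ray X u \<and> 2 \<le> card (ray_left_ext X u)}"

lemma length_seq_prefix[simp]: "length (seq_prefix n u) = n" by (simp add: seq_prefix_def)

lemma nth_seq_prefix[simp]: "k < n \<Longrightarrow> seq_prefix n u ! k = u k" by (simp add: seq_prefix_def)

lemma seq_prefix_0[simp]: "seq_prefix 0 u = []" by (simp add: seq_prefix_def)

lemma seq_prefix_Suc: "seq_prefix (Suc n) u = seq_prefix n u @ [u n]" by (simp add: seq_prefix_def)

lemma seq_prefix_seq_cons: "seq_prefix (Suc n) (seq_cons a u) = a # seq_prefix n u"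
  by (rule nth_equalityI) (auto simp: seq_cons_def nth_Cons' split: nat.splits)

lemma take_seq_prefix: "m \<le> n \<Longrightarrow> take m (seq_prefix n u) = seq_prefix m u"
  by (rule nth_equalityI) auto

lemma seq_prefix_ray: "seq_prefix n (ray x t) = factor_at x t n"
  by (rule nth_equalityI) (auto simp: ray_def)

lemma ray_shift_by: "ray (shift_by n x) t = ray x (t + n)"
  by (auto simp: ray_def shift_by_def algebra_simps)

lemma seq_drop_ray: "seq_drop j (ray x t) = ray x (t + int j)"
  by (auto simp: ray_def seq_drop_def algebra_simps)

lemma ray_pred: "ray x (t - 1) = seq_cons (x (t - 1)) (ray x t)"
  by (auto simp: ray_def seq_cons_def algebra_simps split: nat.splits)

lemma ray_eq_iff: "ray x t = ray y s \<longleftrightarrow> (\<forall>k::nat. x (t + int k) = y (s + int k))"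
  by (auto simp: ray_def fun_eq_iff)

lemma seq_drop_seq_drop[simp]: "seq_drop i (seq_drop j u) = seq_drop (i + j) u"
  by (auto simp: seq_drop_def algebra_simps)

lemma seq_drop_0[simp]: "seq_drop 0 u = u" by (simp add: seq_drop_def)

lemma seq_cons_seq_drop: "seq_cons (u j) (seq_drop (Suc j) u) = seq_drop j u"
  by (auto simp: seq_drop_def seq_cons_def fun_eq_iff split: nat.splits)

lemma is_ray_ray: "x \<in> X \<Longrightarrow> is_ray X (ray x t)"
  by (simp add: is_ray_def seq_prefix_ray lang_factor)

lemma ray_left_ext_ray: "x \<in> X \<Longrightarrow> x (t - 1) \<in> ray_left_ext X (ray x t)"
proof -
  assume x: "x \<in> X"
  have "x (t - 1) # seq_prefix n (ray x t) \<in> lang X" for n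
    using factor_at_Suc_left[of x t n] lang_factor[OF x, of "t - 1" "Suc n"] by (simp add: seq_prefix_ray)
  thus ?thesis by (simp add: ray_left_ext_def)
qed

lemma is_ray_seq_drop: "is_ray X u \<Longrightarrow> is_ray X (seq_drop j u)"
proof -
  assume u: "is_ray X u"
  have "seq_prefix n (seq_drop j u) = drop j (seq_prefix (j + n) u)" for n
    by (rule nth_equalityI) (auto simp: seq_drop_def algebra_simps)
  thus ?thesis using u by (simp add: is_ray_def lang_drop)
qed

lemma ray_left_ext_seq_drop: "is_ray X u \<Longrightarrow> u j \<in> ray_left_ext X (seq_drop (Suc j) u)"
proof -
  assume u: "is_ray X u"
  have "u j # seq_prefix n (seq_drop (Suc j) u) = drop j (seq_prefix (Suc j + n) u)" for n
    by (rule nth_equalityI) (auto simp: seq_drop_def nth_Cons' algebra_simps)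
  thus ?thesis using u by (simp add: is_ray_def ray_left_ext_def lang_drop)
qed

lemma is_ray_seq_cons: "a \<in> ray_left_ext X u \<Longrightarrow> is_ray X (seq_cons a u)"
proof -
  assume a: "a \<in> ray_left_ext X u"
  have "seq_prefix n (seq_cons a u) \<in> lang X" for n
  proof (cases n)
    case 0
    have "a # seq_prefix 0 u \<in> lang X" using a unfolding ray_left_ext_def by blast
    hence "[a] \<in> lang X" by simp
    then show ?thesis using 0 lang_take[of "[a]" X 0] by simp
  next
    case (Suc m)
    then show ?thesis using a by (simp add: seq_prefix_seq_cons ray_left_ext_def)
  qed
  thus ?thesis by (simp add: is_ray_def)
qed

lemma ray_left_ext_subset: "ray_left_ext X u \<subseteq> left_ext X (seq_prefix n u)"
  by (auto simp: ray_left_ext_def left_ext_def)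

lemma left_ext_seq_prefix_antimono:
  assumes "m \<le> n" shows "left_ext X (seq_prefix n u) \<subseteq> left_ext X (seq_prefix m u)"
proof
  fix a assume "a \<in> left_ext X (seq_prefix n u)"
  hence "a # seq_prefix n u \<in> lang X" by (simp add: left_ext_def)
  hence "take (Suc m) (a # seq_prefix n u) \<in> lang X" by (rule lang_take)
  thus "a \<in> left_ext X (seq_prefix m u)" using assms by (simp add: take_seq_prefix left_ext_def)
qed

lemma left_ext_seq_prefix_eventually:
  fixes X :: "(int \<Rightarrow> 'a::finite) set"
  shows "\<exists>N. \<forall>n\<ge>N. left_ext X (seq_prefix n u) = ray_left_ext X u"
proof -
  define S where "S = - ray_left_ext X u"
  have "\<forall>a\<in>S. \<exists>n. a # seq_prefix n u \<notin> lang X" by (auto simp: S_def ray_left_ext_def)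
  then obtain na where na: "\<And>a. a \<in> S \<Longrightarrow> a # seq_prefix (na a) u \<notin> lang X" by metis
  define N where "N = Max (na ` S)"
  have "left_ext X (seq_prefix n u) = ray_left_ext X u" if "n \<ge> N" for n
  proof
    show "left_ext X (seq_prefix n u) \<subseteq> ray_left_ext X u"
    proof
      fix a assume a: "a \<in> left_ext X (seq_prefix n u)"
      show "a \<in> ray_left_ext X u"
      proof (rule ccontr)
        assume "a \<notin> ray_left_ext X u"
        hence aS: "a \<in> S" by (simp add: S_def)
        hence "na a \<le> N" unfolding N_def by (intro Max_ge) auto
        hence "a \<in> left_ext X (seq_prefix (na a) u)" using left_ext_seq_prefix_antimono[of "na a" n X u] a that by auto
        thus False using na[OF aS] by (simp add: left_ext_def)
      qed
    qed
  qed (rule ray_left_ext_subset)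
  thus ?thesis by blast
qed

lemma ray_left_ext_nonempty:
  fixes X :: "(int \<Rightarrow> 'a::finite) set"
  assumes u: "is_ray X u" shows "ray_left_ext X u \<noteq> {}"
proof -
  obtain N where N: "\<And>n. n \<ge> N \<Longrightarrow> left_ext X (seq_prefix n u) = ray_left_ext X u" using left_ext_seq_prefix_eventually by blast
  obtain a where "a # seq_prefix N u \<in> lang X" using u lang_ext_left by (metis is_ray_def)
  thus ?thesis using N[of N] by (auto simp: left_ext_def)
qed

lemma ray_realised:
  fixes X :: "(int \<Rightarrow> 'a::finite) set"
  assumes ss: "is_shift_space X" and v: "is_ray X v"
  shows "\<exists>x\<in>X. ray x 0 = v"
proof -
  define vs where "vs = rec_nat v (\<lambda>k w. seq_cons (SOME a. a \<in> ray_left_ext X w) w)"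
  have vs0: "vs 0 = v" and vsS: "\<And>k. vs (Suc k) = seq_cons (SOME a. a \<in> ray_left_ext X (vs k)) (vs k)"
    by (simp_all add: vs_def)
  have isr: "is_ray X (vs k)" for k
  proof (induction k)
    case 0 then show ?case using v vs0 by simp
  next
    case (Suc k)
    have "(SOME a. a \<in> ray_left_ext X (vs k)) \<in> ray_left_ext X (vs k)"
      using ray_left_ext_nonempty[OF Suc] by (simp add: some_in_eq)
    then show ?case by (simp add: vsS is_ray_seq_cons)
  qed
  have rel: "vs (k + m) (j + m) = vs k j" for k m j
    by (induction m) (auto simp: vsS seq_cons_def)
  define x where "x = (\<lambda>i::int. if 0 \<le> i then v (nat i) else vs (nat (-i)) 0)"
  have xk: "x i = vs k (nat (i + int k))" if "0 \<le> i + int k" for i k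
  proof (cases "0 \<le> i")
    case True
    have "vs (0 + k) (nat i + k) = vs 0 (nat i)" by (rule rel)
    moreover have "nat (i + int k) = nat i + k" using True by simp
    ultimately show ?thesis using True by (simp add: x_def vs0)
  next
    case False
    define a where "a = nat (-i)"
    have ak: "a \<le> k" "k = a + (k - a)" "nat (i + int k) = 0 + (k - a)" using False that by (auto simp: a_def)
    have "vs (a + (k - a)) (0 + (k - a)) = vs a 0" by (rule rel)
    then show ?thesis using False ak by (simp add: x_def a_def)
  qed
  have fac: "factor_at x i n \<in> lang X" for i n
  proof -
    define k where "k = nat (-i)"
    define s where "s = nat (i + int k)"
    have "factor_at x i n = drop s (seq_prefix (s + n) (vs k))"
    proof (rule nth_equalityI)
      fix j assume "j < length (factor_at x i n)"
      hence j: "j < n" by simp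
      have "0 \<le> i + int j + int k" by (simp add: k_def)
      hence "x (i + int j) = vs k (nat (i + int j + int k))" using xk by simp
      moreover have "nat (i + int j + int k) = s + j" by (auto simp: s_def k_def nat_add_distrib)
      ultimately show "factor_at x i n ! j = drop s (seq_prefix (s + n) (vs k)) ! j" using j by simp
    qed simp
    thus ?thesis using isr[of k] lang_drop by (auto simp: is_ray_def)
  qed
  have "x \<in> X" by (rule mem_if_factors_in_lang[OF ss fac])
  moreover have "ray x 0 = v" by (auto simp: ray_def x_def)
  ultimately show ?thesis by blast
qed

lemma ray_left_ext_realised:
  fixes X :: "(int \<Rightarrow> 'a::finite) set"
  assumes ss: "is_shift_space X" and a: "a \<in> ray_left_ext X u"
  shows "\<exists>y\<in>X. ray y 0 = u \<and> y (-1) = a"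
proof -
  obtain x where x: "x \<in> X" "ray x 0 = seq_cons a u" using ray_realised[OF ss is_ray_seq_cons[OF a]] by blast
  have "ray (shift_by 1 x) 0 = u"
  proof
    fix k show "ray (shift_by 1 x) 0 k = u k"
      using fun_cong[OF x(2), of "Suc k"] by (simp add: ray_def shift_by_def seq_cons_def add.commute)
  qed
  moreover have "shift_by 1 x (-1) = a" using fun_cong[OF x(2), of 0] by (simp add: ray_def shift_by_def seq_cons_def)
  ultimately show ?thesis using shift_by_mem[OF ss x(1)] by blast
qed

lemma periodic_mult:
  assumes "\<And>i. z (i + p) = z i"
  shows "z (i + int q * p) = z i"
proof (induction q)
  case (Suc q)
  have "z (i + int (Suc q) * p) = z ((i + int q * p) + p)" by (simp add: algebra_simps)
  also have "\<dots> = z i" using assms Suc by simp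
  finally show ?case .
qed simp

lemma eventually_periodic_mult:
  fixes x :: "int \<Rightarrow> 'a"
  assumes per: "\<And>i. t \<le> i \<Longrightarrow> x (i + p) = x i" and p: "0 \<le> p" and j: "t \<le> j"
  shows "x (j + int q * p) = x j"
proof (induction q)
  case (Suc q)
  have "x (j + int (Suc q) * p) = x ((j + int q * p) + p)" by (simp add: algebra_simps)
  also have "\<dots> = x (j + int q * p)" using p j by (intro per) (simp add: add_increasing2)
  finally show ?case using Suc by simp
qed simp

lemma periodic_extension_agrees:
  fixes x :: "int \<Rightarrow> 'a" and p t i :: int
  assumes p: "0 < p" and per: "\<And>i. t \<le> i \<Longrightarrow> x (i + p) = x i" and i: "t \<le> i"
  shows "x (t + (i - t) mod p) = x i"
proof -
  have "0 \<le> (i - t) div p" using p i by (simp add: pos_imp_zdiv_nonneg_iff)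
  then have i_eq: "i = (t + (i - t) mod p) + int (nat ((i - t) div p)) * p" by simp
  have "t \<le> t + (i - t) mod p" using p by simp
  from eventually_periodic_mult[where x = x and q = "nat ((i - t) div p)", OF per less_imp_le[OF p] this]
  have "x i = x (t + (i - t) mod p)" by (simp only: i_eq[symmetric])
  then show ?thesis by (rule sym)
qed

lemma periodic_point_if_ray_recurs:
  fixes X :: "(int \<Rightarrow> 'a::finite) set"
  assumes ss: "is_shift_space X" and x: "x \<in> X" and eq: "ray x t1 = ray x t2" and lt: "t1 < t2"
  shows "\<exists>z\<in>X. (\<exists>p>0. \<forall>i. z (i + p) = z i) \<and> ray z t1 = ray x t1"
proof -
  define p where "p = t2 - t1"
  have p: "p > 0" using lt by (simp add: p_def)
  have per: "x (i + p) = x i" if "t1 \<le> i" for i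
    using fun_cong[OF eq, of "nat (i - t1)"] that by (simp add: ray_def p_def algebra_simps)
  define z where "z = (\<lambda>i. x (t1 + (i - t1) mod p))"
  have zper: "z (i + p) = z i" for i
  proof -
    have "i + p - t1 = (i - t1) + p" by simp
    then have "(i + p - t1) mod p = (i - t1) mod p" by (simp only: mod_add_self2)
    then show ?thesis by (simp add: z_def)
  qed
  have zx: "z i = x i" if "t1 \<le> i" for i
    unfolding z_def by (rule periodic_extension_agrees[where x = x, OF p per that])
  have "factor_at z i n \<in> lang X" for i n
  proof -
    define q where "q = nat (t1 - i)"
    have "int q * 1 \<le> int q * p" using p by (intro mult_left_mono) auto
    then have ge: "t1 \<le> i + int q * p" by (simp add: q_def split: if_splits)
    have "factor_at z i n = factor_at x (i + int q * p) n"
    proof (rule nth_equalityI)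
      fix j assume "j < length (factor_at z i n)"
      have "z (i + int j) = z (i + int j + int q * p)" using periodic_mult[of z p, OF zper] by simp
      also have "\<dots> = x (i + int j + int q * p)" using ge by (intro zx) simp
      finally show "factor_at z i n ! j = factor_at x (i + int q * p) n ! j"
        using \<open>j < length (factor_at z i n)\<close> by (simp add: algebra_simps)
    qed simp
    then show ?thesis using lang_factor[OF x] by simp
  qed
  then have "z \<in> X" by (rule mem_if_factors_in_lang[OF ss])
  moreover have "ray z t1 = ray x t1" by (auto simp: ray_eq_iff zx)
  ultimately show ?thesis using p zper by blast
qed

section \<open>Complexity\<close>

lemma sum_diff_1_add_card:
  fixes f :: "'b \<Rightarrow> nat"
  assumes "\<And>x. x \<in> S \<Longrightarrow> 1 \<le> f x"
  shows "(\<Sum>x\<in>S. f x - 1) + card S = (\<Sum>x\<in>S. f x)"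
proof -
  have "(\<Sum>x\<in>S. f x - 1) + (\<Sum>x\<in>S. 1) = (\<Sum>x\<in>S. f x - 1 + 1)" by (rule sum.distrib[symmetric])
  also have "\<dots> = (\<Sum>x\<in>S. f x)" by (intro sum.cong refl) (metis assms le_add_diff_inverse2)
  finally show ?thesis by simp
qed

definition left_excess :: "(int \<Rightarrow> 'a) set \<Rightarrow> nat \<Rightarrow> nat" where
  "left_excess X n = (\<Sum>w\<in>lang_n X n. card (left_ext X w) - 1)"

lemma left_ext_ne: "w \<in> lang X \<Longrightarrow> left_ext X w \<noteq> {}"
  using lang_ext_left by (fastforce simp: left_ext_def)

lemma right_ext_ne: "w \<in> lang X \<Longrightarrow> right_ext X w \<noteq> {}"
  using lang_ext_right by (fastforce simp: right_ext_def)

lemma lang_n_Suc_left: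
  "lang_n X (Suc n) = (\<lambda>(w,a). a # w) ` (SIGMA w:lang_n X n. left_ext X w)"
proof (intro set_eqI iffI)
  fix v assume v: "v \<in> lang_n X (Suc n)"
  then obtain a w where vw: "v = a # w" by (cases v) (auto simp: lang_n_def)
  have "w \<in> lang X" using v vw lang_suffix[of "[a]" w X] by (simp add: lang_n_def)
  thus "v \<in> (\<lambda>(w,a). a # w) ` (SIGMA w:lang_n X n. left_ext X w)"
    using v vw by (auto simp: lang_n_def left_ext_def image_iff)
qed (auto simp: lang_n_def left_ext_def)

lemma lang_n_Suc_right:
  "lang_n X (Suc n) = (\<lambda>(w,b). w @ [b]) ` (SIGMA w:lang_n X n. right_ext X w)"
proof (intro set_eqI iffI)
  fix v assume v: "v \<in> lang_n X (Suc n)"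
  then obtain b w where vw: "v = w @ [b]" by (cases v rule: rev_cases) (auto simp: lang_n_def)
  have "w \<in> lang X" using v vw lang_prefix[of w "[b]" X] by (simp add: lang_n_def)
  thus "v \<in> (\<lambda>(w,b). w @ [b]) ` (SIGMA w:lang_n X n. right_ext X w)"
    using v vw by (auto simp: lang_n_def right_ext_def image_iff)
qed (auto simp: lang_n_def right_ext_def)

lemma p_cplx_Suc:
  fixes X :: "(int \<Rightarrow> 'a::finite) set"
  shows "p_cplx X (Suc n) = (\<Sum>w\<in>lang_n X n. card (left_ext X w))"
proof -
  have "inj_on (\<lambda>(w,a). a # w) (SIGMA w:lang_n X n. left_ext X w)" by (auto simp: inj_on_def)
  hence "card (lang_n X (Suc n)) = card (SIGMA w:lang_n X n. left_ext X w)"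
    by (simp add: lang_n_Suc_left card_image)
  also have "\<dots> = (\<Sum>w\<in>lang_n X n. card (left_ext X w))"
    by (rule card_SigmaI) (auto simp: finite_lang_n)
  finally show ?thesis by (simp add: p_cplx_def)
qed

lemma s_cplx_eq_left_excess:
  fixes X :: "(int \<Rightarrow> 'a::finite) set"
  shows "s_cplx X n = int (left_excess X n)"
proof -
  have ge: "card (left_ext X w) \<ge> 1" if "w \<in> lang_n X n" for w
    using left_ext_ne[of w X] that by (auto simp: lang_n_def card_gt_0_iff Suc_le_eq)
  have "int (left_excess X n) = (\<Sum>w\<in>lang_n X n. int (card (left_ext X w)) - 1)"
    unfolding left_excess_def of_nat_sum using ge by (intro sum.cong) (auto simp: of_nat_diff)
  also have "\<dots> = int (p_cplx X (Suc n)) - int (p_cplx X n)"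
    using p_cplx_Suc[of X n, unfolded p_cplx_def] by (simp add: sum_subtractf p_cplx_def)
  finally show ?thesis by (simp add: s_cplx_def)
qed

lemma left_excess_Suc:
  fixes X :: "(int \<Rightarrow> 'a::finite) set"
  shows "left_excess X (Suc n) = (\<Sum>w\<in>lang_n X n. \<Sum>b\<in>right_ext X w. card (left_ext X (w @ [b])) - 1)"
proof -
  have inj: "inj_on (\<lambda>(w,b). w @ [b]) (SIGMA w:lang_n X n. right_ext X w)" by (auto simp: inj_on_def)
  have "left_excess X (Suc n) = (\<Sum>p\<in>(SIGMA w:lang_n X n. right_ext X w). card (left_ext X (fst p @ [snd p])) - 1)"
    unfolding left_excess_def lang_n_Suc_right by (subst sum.reindex[OF inj]) (auto intro!: sum.cong)
  also have "\<dots> = (\<Sum>w\<in>lang_n X n. \<Sum>b\<in>right_ext X w. card (left_ext X (w @ [b])) - 1)"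
    by (subst sum.Sigma) (auto simp: finite_lang_n split_def)
  finally show ?thesis .
qed

lemma eventually_seq_prefix_inj_stable:
  fixes X :: "(int \<Rightarrow> 'a::finite) set"
  assumes F: "finite F"
  shows "\<exists>N. \<forall>n\<ge>N. inj_on (\<lambda>u. seq_prefix n u) F \<and> (\<forall>u\<in>F. left_ext X (seq_prefix n u) = ray_left_ext X u)"
proof -
  have e1: "eventually (\<lambda>n. \<forall>u\<in>F. left_ext X (seq_prefix n u) = ray_left_ext X u) sequentially"
    using F by (intro eventually_ball_finite) (auto simp: eventually_sequentially intro: left_ext_seq_prefix_eventually)
  have e2: "eventually (\<lambda>n. \<forall>u\<in>F. \<forall>v\<in>F. u \<noteq> v \<longrightarrow> seq_prefix n u \<noteq> seq_prefix n v) sequentially"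
  proof (intro eventually_ball_finite F ballI)
    fix u v assume "u \<in> F" "v \<in> F"
    show "eventually (\<lambda>n. u \<noteq> v \<longrightarrow> seq_prefix n u \<noteq> seq_prefix n v) sequentially"
    proof (cases "u = v")
      case False
      then obtain k where k: "u k \<noteq> v k" by auto
      have "seq_prefix n u \<noteq> seq_prefix n v" if "n \<ge> Suc k" for n
      proof
        assume "seq_prefix n u = seq_prefix n v"
        hence "seq_prefix n u ! k = seq_prefix n v ! k" by simp
        thus False using k that by simp
      qed
      thus ?thesis by (auto simp: eventually_sequentially)
    qed simp
  qed
  from eventually_conj[OF e1 e2] obtain N where
    "\<And>n. n \<ge> N \<Longrightarrow> (\<forall>u\<in>F. left_ext X (seq_prefix n u) = ray_left_ext X u) \<and>
        (\<forall>u\<in>F. \<forall>v\<in>F. u \<noteq> v \<longrightarrow> seq_prefix n u \<noteq> seq_prefix n v)"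
    by (auto simp: eventually_sequentially)
  thus ?thesis by (auto simp: inj_on_def) blast
qed

lemma left_excess_split:
  fixes X :: "(int \<Rightarrow> 'a::finite) set"
  assumes F: "finite F" and rays: "\<And>u. u \<in> F \<Longrightarrow> is_ray X u"
    and inj: "inj_on (\<lambda>u. seq_prefix n u) F" and st: "\<And>u. u \<in> F \<Longrightarrow> left_ext X (seq_prefix n u) = ray_left_ext X u"
  shows "left_excess X n = (\<Sum>u\<in>F. card (ray_left_ext X u) - 1)
          + (\<Sum>w\<in>lang_n X n - (\<lambda>u. seq_prefix n u) ` F. card (left_ext X w) - 1)"
proof -
  have sub: "(\<lambda>u. seq_prefix n u) ` F \<subseteq> lang_n X n" using rays by (auto simp: is_ray_def lang_n_def)
  have "left_excess X n = (\<Sum>w\<in>(\<lambda>u. seq_prefix n u) ` F. card (left_ext X w) - 1)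
          + (\<Sum>w\<in>lang_n X n - (\<lambda>u. seq_prefix n u) ` F. card (left_ext X w) - 1)"
    unfolding left_excess_def by (subst sum.subset_diff[OF sub finite_lang_n]) (simp add: add.commute)
  also have "(\<Sum>w\<in>(\<lambda>u. seq_prefix n u) ` F. card (left_ext X w) - 1) = (\<Sum>u\<in>F. card (ray_left_ext X u) - 1)"
    by (subst sum.reindex[OF inj]) (auto simp: st)
  finally show ?thesis .
qed

lemma special_rays_bounded:
  fixes X :: "(int \<Rightarrow> 'a::finite) set"
  assumes c: "\<And>n. n \<ge> N \<Longrightarrow> left_excess X n = c"
  shows "finite (special_rays X)" and "(\<Sum>u\<in>special_rays X. card (ray_left_ext X u) - 1) \<le> c"
proof -
  have bound: "(\<Sum>u\<in>F. card (ray_left_ext X u) - 1) \<le> c" if F: "finite F" "F \<subseteq> special_rays X" for F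
  proof -
    obtain M where M: "\<And>n. n \<ge> M \<Longrightarrow> inj_on (\<lambda>u. seq_prefix n u) F \<and> (\<forall>u\<in>F. left_ext X (seq_prefix n u) = ray_left_ext X u)"
      using eventually_seq_prefix_inj_stable[OF F(1)] by blast
    define n where "n = max M N"
    have "left_excess X n = (\<Sum>u\<in>F. card (ray_left_ext X u) - 1)
          + (\<Sum>w\<in>lang_n X n - (\<lambda>u. seq_prefix n u) ` F. card (left_ext X w) - 1)"
      using M[of n] F by (intro left_excess_split) (auto simp: n_def special_rays_def)
    moreover have "left_excess X n = c" using c by (simp add: n_def)
    ultimately show ?thesis by linarith
  qed
  show fin: "finite (special_rays X)"
  proof (rule ccontr)
    assume "infinite (special_rays X)"
    then obtain F where F: "finite F" "card F = Suc c" "F \<subseteq> special_rays X"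
      using infinite_arbitrarily_large by blast
    have "card F = (\<Sum>u\<in>F. 1)" by simp
    also have "\<dots> \<le> (\<Sum>u\<in>F. card (ray_left_ext X u) - 1)"
      using F(3) by (intro sum_mono) (auto simp: special_rays_def)
    also have "\<dots> \<le> c" using bound F by blast
    finally show False using F(2) by simp
  qed
  show "(\<Sum>u\<in>special_rays X. card (ray_left_ext X u) - 1) \<le> c" using bound[OF fin] by simp
qed

section \<open>Trees\<close>

lemma cycle_neighbours:
  assumes cyc: "is_cycle V G cs" and v: "v \<in> set cs"
  obtains u w where "u \<in> set cs" "w \<in> set cs" "u \<noteq> w" "G u v" "G v w"
proof -
  define k where "k = length cs"
  have k3: "3 \<le> k" and dist: "distinct cs" and cons: "\<And>i. Suc i < k \<Longrightarrow> G (cs ! i) (cs ! Suc i)"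
    using cyc by (auto simp: is_cycle_def k_def)
  then have "cs \<noteq> []" by (auto simp: k_def)
  then have close: "G (cs ! (k - 1)) (cs ! 0)"
    using cyc by (simp add: is_cycle_def k_def last_conv_nth hd_conv_nth)
  obtain i where i: "i < k" "cs ! i = v" using v by (auto simp: k_def in_set_conv_nth)
  define p where "p = (if i = 0 then k - 1 else i - 1)"
  define q where "q = (if Suc i < k then Suc i else 0)"
  have pq: "p < k" "q < k" "p \<noteq> q" using i(1) k3 by (auto simp: p_def q_def)
  have "G (cs ! p) v" using cons[of "i - 1"] close i by (auto simp: p_def)
  moreover have "G v (cs ! q)"
  proof (cases "Suc i < k")
    case False
    then have "i = k - 1" using i(1) by simp
    then show ?thesis using close i(2) k3 by (simp add: q_def)
  qed (use cons i in \<open>auto simp: q_def\<close>)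
  moreover have "cs ! p \<noteq> cs ! q" using pq dist by (simp add: k_def nth_eq_iff_index_eq)
  ultimately show ?thesis using that nth_mem pq unfolding k_def by blast
qed

lemma star_acyclic:
  fixes G :: "('a + 'b) \<Rightarrow> ('a + 'b) \<Rightarrow> bool"
  assumes GLR: "\<And>a b. G (Inl a) (Inr b) = E a b" and GRL: "\<And>a b. G (Inr b) (Inl a) = E a b"
    and GLL: "\<And>a a'. \<not> G (Inl a) (Inl a')" and GRR: "\<And>b b'. \<not> G (Inr b) (Inr b')"
    and uniq: "\<And>b. b \<in> R \<Longrightarrow> b \<noteq> b0 \<Longrightarrow> \<exists>!a. E a b"
  shows "\<not> is_cycle (Inl ` A \<union> Inr ` R) G cs"
proof
  assume cyc: "is_cycle (Inl ` A \<union> Inr ` R) G cs"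
  then have sub: "set cs \<subseteq> Inl ` A \<union> Inr ` R" and "cs \<noteq> []" by (auto simp: is_cycle_def)
  have right: "b = b0" if b: "Inr b \<in> set cs" for b
  proof (rule ccontr)
    assume "b \<noteq> b0"
    obtain u w where uw: "u \<in> set cs" "w \<in> set cs" "u \<noteq> w" "G u (Inr b)" "G (Inr b) w"
      using cycle_neighbours[OF cyc b] .
    obtain a1 a2 where a: "u = Inl a1" "w = Inl a2" using uw(4,5) GRR by (cases u; cases w) auto
    have "b \<in> R" using sub b by auto
    moreover have "E a1 b" "E a2 b" using uw(4,5) a GLR GRL by auto
    ultimately have "a1 = a2" using uniq \<open>b \<noteq> b0\<close> by blast
    then show False using uw(3) a by simp
  qed
  obtain a where a: "Inl a \<in> set cs"
  proof (cases "hd cs")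
    case (Inl a)
    then show ?thesis using that hd_in_set[OF \<open>cs \<noteq> []\<close>] by simp
  next
    case (Inr b)
    obtain u w where u: "u \<in> set cs" "w \<in> set cs" "u \<noteq> w" "G u (hd cs)" "G (hd cs) w"
      using cycle_neighbours[OF cyc hd_in_set[OF \<open>cs \<noteq> []\<close>]] .
    have "\<nexists>b'. u = Inr b'" using u(4) Inr GRR by auto
    then obtain a' where "u = Inl a'" by (cases u) auto
    then show ?thesis using that u(1) by blast
  qed
  obtain u w where uw: "u \<in> set cs" "w \<in> set cs" "u \<noteq> w" "G u (Inl a)" "G (Inl a) w"
    using cycle_neighbours[OF cyc a] .
  have "v = Inr b0" if "v \<in> set cs" "G v (Inl a) \<or> G (Inl a) v" for v
  proof (cases v)
    case Inl
    then show ?thesis using that(2) GLL by auto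
  qed (use that(1) right in simp)
  then show False using uw by metis
qed

lemma is_tree_star:
  fixes G :: "('a + 'b) \<Rightarrow> ('a + 'b) \<Rightarrow> bool"
  assumes A: "A \<noteq> {}" and b0: "b0 \<in> R"
    and GLR: "\<And>a b. G (Inl a) (Inr b) = E a b" and GRL: "\<And>a b. G (Inr b) (Inl a) = E a b"
    and GLL: "\<And>a a'. \<not> G (Inl a) (Inl a')" and GRR: "\<And>b b'. \<not> G (Inr b) (Inr b')"
    and Ein: "\<And>a b. E a b \<Longrightarrow> a \<in> A \<and> b \<in> R"
    and all: "\<And>a. a \<in> A \<Longrightarrow> E a b0"
    and uniq: "\<And>b. b \<in> R \<Longrightarrow> b \<noteq> b0 \<Longrightarrow> \<exists>!a. E a b"
  shows "is_tree (Inl ` A \<union> Inr ` R) G"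
proof -
  let ?V = "Inl ` A \<union> Inr ` R"
  let ?R = "\<lambda>a b. a \<in> ?V \<and> b \<in> ?V \<and> G a b"
  have left: "?R (Inl a) (Inr b0) \<and> ?R (Inr b0) (Inl a)" if "a \<in> A" for a
    using that b0 all GLR GRL by auto
  have to_center: "?R\<^sup>*\<^sup>* v (Inr b0) \<and> ?R\<^sup>*\<^sup>* (Inr b0) v" if v: "v \<in> ?V" for v
  proof (cases v)
    case (Inl a)
    then show ?thesis using left v by blast
  next
    case (Inr b)
    show ?thesis
    proof (cases "b = b0")
      case False
      then obtain a where ab: "E a b" using uniq v Inr by blast
      then have r1: "?R v (Inl a)" "?R (Inl a) v" using Ein Inr GLR GRL by auto
      have r2: "?R (Inl a) (Inr b0)" "?R (Inr b0) (Inl a)" using left Ein[OF ab] by auto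
      show ?thesis
        using converse_rtranclp_into_rtranclp[of ?R v "Inl a" "Inr b0", OF r1(1) r_into_rtranclp[of ?R, OF r2(1)]]
          converse_rtranclp_into_rtranclp[of ?R "Inr b0" "Inl a" v, OF r2(2) r_into_rtranclp[of ?R, OF r1(2)]]
        by blast
    qed (use Inr in auto)
  qed
  then have "\<forall>u\<in>?V. \<forall>v\<in>?V. ?R\<^sup>*\<^sup>* u v" by (meson rtranclp_trans)
  then show ?thesis
    unfolding is_tree_def using A star_acyclic[OF GLR GRL GLL GRR uniq] by auto
qed

definition is_path :: "'v set \<Rightarrow> ('v \<Rightarrow> 'v \<Rightarrow> bool) \<Rightarrow> 'v list \<Rightarrow> bool" where
  "is_path V G xs \<longleftrightarrow> distinct xs \<and> set xs \<subseteq> V \<and> (\<forall>i. Suc i < length xs \<longrightarrow> G (xs ! i) (xs ! Suc i))"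

lemma finite_paths:
  assumes "finite V" shows "finite {xs. is_path V G xs}"
proof -
  have "{xs. is_path V G xs} \<subseteq> {xs. set xs \<subseteq> V \<and> length xs \<le> card V}"
    using assms by (auto simp: is_path_def distinct_card[symmetric] intro: card_mono)
  then show ?thesis using finite_lists_length_le[OF assms] by (rule finite_subset)
qed

lemma is_path_snoc:
  assumes xs: "is_path V G xs" "xs \<noteq> []" and z: "z \<in> V" "z \<notin> set xs" "G (last xs) z"
  shows "is_path V G (xs @ [z])"
proof -
  have "G ((xs @ [z]) ! i) ((xs @ [z]) ! Suc i)" if "Suc i < length (xs @ [z])" for i
  proof (cases "Suc i < length xs")
    case True
    then show ?thesis using xs(1) by (simp add: is_path_def nth_append)
  next
    case False
    then have "i = length xs - 1" using that by simp
    then show ?thesis using xs(2) z(3) by (simp add: nth_append last_conv_nth)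
  qed
  then show ?thesis using xs(1) z by (auto simp: is_path_def)
qed

lemma is_cycle_drop_if_closed:
  assumes xs: "is_path V G xs" and j: "j + 3 \<le> length xs" and closed: "G (last xs) (xs ! j)"
  shows "is_cycle V G (drop j xs)"
proof -
  have "set (drop j xs) \<subseteq> V" using xs by (meson is_path_def set_drop_subset subset_trans)
  moreover have "last (drop j xs) = last xs" "hd (drop j xs) = xs ! j"
    using j by (simp_all add: last_drop hd_drop_conv_nth)
  ultimately show ?thesis using xs j closed by (auto simp: is_cycle_def is_path_def)
qed

lemma acyclic_graph_has_leaf:
  assumes fin: "finite V" and nocyc: "\<And>cs. \<not> is_cycle V G cs"
    and sym: "\<And>u v. G u v \<Longrightarrow> G v u" and irr: "\<And>u. \<not> G u u"
    and e: "u0 \<in> V" "v0 \<in> V" "G u0 v0"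
  shows "\<exists>x y. x \<in> V \<and> y \<in> V \<and> G x y \<and> (\<forall>z\<in>V. G x z \<longrightarrow> z = y)"
proof -
  let ?P = "{xs. is_path V G xs \<and> 2 \<le> length xs}"
  have fin_len: "finite (length ` ?P)" using finite_paths[OF fin] by (auto intro: finite_subset)
  have "[u0, v0] \<in> ?P" using e irr[of u0] by (auto simp: is_path_def nth_Cons' split: if_splits)
  then have "Max (length ` ?P) \<in> length ` ?P" using fin_len by (intro Max_in) auto
  then obtain xs where xs: "xs \<in> ?P" and max: "length xs = Max (length ` ?P)" by auto
  have longest: "length ys \<le> length xs" if "ys \<in> ?P" for ys
    using Max_ge[OF fin_len] that max by auto
  define k where "k = length xs"
  define x where "x = xs ! (k - 1)"
  define y where "y = xs ! (k - 2)"
  have k2: "2 \<le> k" and path: "is_path V G xs" using xs by (auto simp: k_def)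
  then have xne: "xs \<noteq> []" by (auto simp: k_def)
  then have last: "last xs = x" by (simp add: x_def k_def last_conv_nth)
  have xy: "x \<in> V" "y \<in> V" using path k2 by (auto simp: is_path_def x_def y_def k_def)
  have "G y x"
  proof -
    have idx: "Suc (k - 2) < length xs" "Suc (k - 2) = k - 1" using k2 by (auto simp: k_def)
    have "\<forall>i. Suc i < length xs \<longrightarrow> G (xs ! i) (xs ! Suc i)"
      using path unfolding is_path_def by (elim conjE)
    from spec[OF this, of "k - 2"] idx(1) have "G (xs ! (k - 2)) (xs ! Suc (k - 2))" by (rule mp)
    then show ?thesis unfolding x_def y_def idx(2) .
  qed
  have leaf: "z = y" if z: "z \<in> V" "G x z" for z
  proof (cases "z \<in> set xs")
    case False
    then have "xs @ [z] \<in> ?P" using xs z is_path_snoc[OF path xne] last by auto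
    then have "length (xs @ [z]) \<le> length xs" by (rule longest)
    then show ?thesis by simp
  next
    case True
    then obtain j where j: "j < k" "xs ! j = z" by (auto simp: k_def in_set_conv_nth)
    moreover have "j \<noteq> k - 1" using j z irr by (auto simp: x_def)
    moreover have "\<not> j + 3 \<le> k" using is_cycle_drop_if_closed[OF path, of j] nocyc z j last by (auto simp: k_def)
    ultimately have "j = k - 2" by linarith
    then show ?thesis using j by (simp add: y_def)
  qed
  show ?thesis using xy sym[OF \<open>G y x\<close>] leaf by blast
qed

lemma is_tree_remove_leaf:
  assumes tree: "is_tree V G" and sym: "\<And>u v. G u v \<Longrightarrow> G v u"
    and xy: "x \<in> V" "y \<in> V" "y \<noteq> x" and leaf: "\<And>z. z \<in> V \<Longrightarrow> G x z \<Longrightarrow> z = y"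
  shows "is_tree (V - {x}) G"
proof -
  let ?R = "\<lambda>a b. a \<in> V \<and> b \<in> V \<and> G a b"
  let ?R' = "\<lambda>a b. a \<in> V - {x} \<and> b \<in> V - {x} \<and> G a b"
  have conn: "\<forall>u\<in>V. \<forall>v\<in>V. ?R\<^sup>*\<^sup>* u v" and nocyc: "\<And>cs. \<not> is_cycle V G cs"
    using tree by (auto simp: is_tree_def)
  have avoid_leaf: "?R'\<^sup>*\<^sup>* u (if v = x then y else v)" if "?R\<^sup>*\<^sup>* u v" "u \<in> V - {x}" for u v
    using that(1)
  proof (induction rule: rtranclp_induct)
    case (step v v')
    show ?case
    proof (cases "v = x \<or> v' = x")
      case True
      then have "v = y \<and> v' = x \<or> v = x \<and> v' = y" using step(2) sym leaf by blast
      then show ?thesis using step.IH by auto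
    next
      case False
      then show ?thesis using step by (auto intro: rtranclp.rtrancl_into_rtrancl)
    qed
  qed (use that(2) in auto)
  show ?thesis
    unfolding is_tree_def
  proof (intro conjI ballI)
    show "V - {x} \<noteq> {}" using xy by auto
    fix a b assume "a \<in> V - {x}" "b \<in> V - {x}"
    then show "?R'\<^sup>*\<^sup>* a b" using avoid_leaf[of a b] conn by auto
  next
    have "is_cycle (V - {x}) G cs \<Longrightarrow> is_cycle V G cs" for cs by (auto simp: is_cycle_def)
    then show "\<nexists>cs. is_cycle (V - {x}) G cs" using nocyc by blast
  qed
qed

lemma arcs_remove_leaf:
  assumes sym: "\<And>u v. G u v \<Longrightarrow> G v u"
    and xy: "x \<in> V" "y \<in> V" "G x y" and leaf: "\<And>z. z \<in> V \<Longrightarrow> G x z \<Longrightarrow> z = y"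
  shows "{(u,v). u \<in> V \<and> v \<in> V \<and> G u v}
    = insert (x,y) (insert (y,x) {(u,v). u \<in> V - {x} \<and> v \<in> V - {x} \<and> G u v})"
proof (intro set_eqI iffI)
  fix p assume "p \<in> {(u,v). u \<in> V \<and> v \<in> V \<and> G u v}"
  then obtain a b where p: "p = (a, b)" "a \<in> V" "b \<in> V" "G a b" by blast
  have "a = x \<Longrightarrow> b = y" and "b = x \<Longrightarrow> a = y" using p leaf sym by blast+
  then show "p \<in> insert (x,y) (insert (y,x) {(u,v). u \<in> V - {x} \<and> v \<in> V - {x} \<and> G u v})"
    using p by auto
qed (use xy sym[OF xy(3)] in auto)

lemma tree_card_arcs:
  assumes "finite V" and "is_tree V G" and sym: "\<And>u v. G u v \<Longrightarrow> G v u" and irr: "\<And>u. \<not> G u u"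
  shows "card {(u,v). u \<in> V \<and> v \<in> V \<and> G u v} = 2 * (card V - 1)"
  using assms(1,2)
proof (induction "card V" arbitrary: V rule: less_induct)
  case less
  note fin = less.prems(1) and tree = less.prems(2)
  have conn: "\<forall>u\<in>V. \<forall>v\<in>V. (\<lambda>a b. a \<in> V \<and> b \<in> V \<and> G a b)\<^sup>*\<^sup>* u v"
    and nocyc: "\<And>cs. \<not> is_cycle V G cs" using tree by (auto simp: is_tree_def)
  show ?case
  proof (cases "\<exists>u\<in>V. \<exists>v\<in>V. u \<noteq> v")
    case False
    then have "{(u,v). u \<in> V \<and> v \<in> V \<and> G u v} = {}" using irr by auto
    then have "card {(u,v). u \<in> V \<and> v \<in> V \<and> G u v} = 0" by (simp only: card.empty)
    moreover have "card V \<le> 1" using False fin by (auto simp: card_le_Suc0_iff_eq)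
    ultimately show ?thesis by simp
  next
    case True
    then obtain u v where uv: "u \<in> V" "v \<in> V" "u \<noteq> v" by blast
    then obtain u' where e: "u \<in> V" "u' \<in> V" "G u u'"
      using conn by (metis (no_types, lifting) converse_rtranclpE)
    obtain x y where xy: "x \<in> V" "y \<in> V" "G x y" and leaf: "\<And>z. z \<in> V \<Longrightarrow> G x z \<Longrightarrow> z = y"
      using acyclic_graph_has_leaf[OF fin nocyc sym irr e] by blast
    have "y \<noteq> x" using xy irr by auto
    have "card (V - {x}) < card V" using fin xy(1) by (rule card_Diff1_less)
    then have "card {(u,v). u \<in> V - {x} \<and> v \<in> V - {x} \<and> G u v} = 2 * (card (V - {x}) - 1)"
      using less.hyps fin is_tree_remove_leaf[OF tree sym xy(1,2) \<open>y \<noteq> x\<close> leaf] by blast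
    moreover have "finite {(u,v). u \<in> V - {x} \<and> v \<in> V - {x} \<and> G u v}"
      by (rule finite_subset[of _ "V \<times> V"]) (auto simp: fin)
    moreover have "2 \<le> card V" using card_mono[OF fin, of "{u, v}"] uv by simp
    ultimately show ?thesis
      using arcs_remove_leaf[where G = G, OF sym xy leaf] \<open>y \<noteq> x\<close> xy fin by (simp add: card_Diff_singleton)
  qed
qed

lemma ext_adj_sym: "ext_adj X w u v \<Longrightarrow> ext_adj X w v u"
  by (cases u; cases v) auto

lemma ext_adj_irr: "\<not> ext_adj X w u u"
  by (cases u) auto

lemma tree_ext_count:
  fixes X :: "(int \<Rightarrow> 'a::finite) set"
  assumes tree: "is_tree (ext_vertices X w) (ext_adj X w)"
  shows "(\<Sum>b\<in>right_ext X w. card (left_ext X (w @ [b]))) = card (left_ext X w) + card (right_ext X w) - 1"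
proof -
  let ?A = "left_ext X w" and ?R = "right_ext X w"
  let ?V = "ext_vertices X w"
  define Q where "Q = {(a,b). a # w @ [b] \<in> lang X}"
  have QA: "a \<in> ?A" and QR: "b \<in> ?R" if "(a,b) \<in> Q" for a b
  proof -
    have q: "(a # w) @ [b] \<in> lang X" using that by (simp add: Q_def)
    show "a \<in> ?A" using lang_prefix[OF q] by (simp add: left_ext_def)
    have "[a] @ (w @ [b]) \<in> lang X" using q by simp
    show "b \<in> ?R" using lang_suffix[OF \<open>[a] @ (w @ [b]) \<in> lang X\<close>] by (simp add: right_ext_def)
  qed
  have finQ: "finite Q" by (rule finite_subset[of _ UNIV]) auto
  have PS: "{(u,v). u \<in> ?V \<and> v \<in> ?V \<and> ext_adj X w u v}
      = (\<lambda>(a,b). (Inl a, Inr b)) ` Q \<union> (\<lambda>(a,b). (Inr b, Inl a)) ` Q"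
  proof (intro set_eqI iffI)
    fix p assume "p \<in> {(u,v). u \<in> ?V \<and> v \<in> ?V \<and> ext_adj X w u v}"
    then obtain u v where p: "p = (u,v)" "ext_adj X w u v" by auto
    show "p \<in> (\<lambda>(a,b). (Inl a, Inr b)) ` Q \<union> (\<lambda>(a,b). (Inr b, Inl a)) ` Q"
      using p by (cases u; cases v) (auto simp: Q_def image_iff)
  next
    fix p assume "p \<in> (\<lambda>(a,b). (Inl a, Inr b)) ` Q \<union> (\<lambda>(a,b). (Inr b, Inl a)) ` Q"
    thus "p \<in> {(u,v). u \<in> ?V \<and> v \<in> ?V \<and> ext_adj X w u v}"
      using QA QR by (auto simp: Q_def ext_vertices_def)
  qed
  have cPS: "card {(u,v). u \<in> ?V \<and> v \<in> ?V \<and> ext_adj X w u v} = 2 * card Q"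
    unfolding PS
  proof (subst card_Un_disjoint)
    show "card ((\<lambda>(a,b). (Inl a, Inr b)) ` Q) + card ((\<lambda>(a,b). (Inr b, Inl a)) ` Q) = 2 * card Q"
      by (subst card_image, force simp: inj_on_def)+ simp
  qed (auto simp: finQ)
  have cV: "card ?V = card ?A + card ?R"
  proof -
    have "card (Inl ` ?A \<union> Inr ` ?R :: ('a + 'a) set) = card (Inl ` ?A :: ('a + 'a) set) + card (Inr ` ?R :: ('a + 'a) set)"
      by (rule card_Un_disjoint) auto
    thus ?thesis by (simp add: ext_vertices_def card_image)
  qed
  have tc: "card {(u,v). u \<in> ?V \<and> v \<in> ?V \<and> ext_adj X w u v} = 2 * (card ?V - 1)"
    by (rule tree_card_arcs[OF _ tree ext_adj_sym ext_adj_irr]) simp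
  have cQ: "card Q = (\<Sum>b\<in>?R. card (left_ext X (w @ [b])))"
  proof -
    have "Q = (\<lambda>(b,a). (a,b)) ` (SIGMA b:?R. left_ext X (w @ [b]))"
      using QR by (auto simp: Q_def left_ext_def image_iff)
    moreover have "inj_on (\<lambda>(b,a). (a,b)) (SIGMA b:?R. left_ext X (w @ [b]))" by (auto simp: inj_on_def)
    ultimately have "card Q = card (SIGMA b:?R. left_ext X (w @ [b]))" by (simp add: card_image)
    also have "\<dots> = (\<Sum>b\<in>?R. card (left_ext X (w @ [b])))" by (rule card_SigmaI) auto
    finally show ?thesis .
  qed
  show ?thesis using cPS tc cV cQ by simp
qed

lemma tree_left_excess_conserved:
  fixes X :: "(int \<Rightarrow> 'a::finite) set"
  assumes w: "w \<in> lang X" and tree: "is_tree (ext_vertices X w) (ext_adj X w)"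
  shows "(\<Sum>b\<in>right_ext X w. card (left_ext X (w @ [b])) - 1) = card (left_ext X w) - 1"
proof -
  have "1 \<le> card (left_ext X (w @ [b]))" if "b \<in> right_ext X w" for b
    using left_ext_ne[of "w @ [b]" X] that by (auto simp: right_ext_def card_gt_0_iff Suc_le_eq)
  then have "(\<Sum>b\<in>right_ext X w. card (left_ext X (w @ [b])) - 1) + card (right_ext X w)
      = (\<Sum>b\<in>right_ext X w. card (left_ext X (w @ [b])))"
    by (rule sum_diff_1_add_card)
  also have "\<dots> = card (left_ext X w) + card (right_ext X w) - 1" by (rule tree_ext_count[OF tree])
  finally have "(\<Sum>b\<in>right_ext X w. card (left_ext X (w @ [b])) - 1) + card (right_ext X w)
      = card (left_ext X w) + card (right_ext X w) - 1" .
  moreover have "1 \<le> card (left_ext X w)" using left_ext_ne[OF w] by (simp add: card_gt_0_iff Suc_le_eq)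
  ultimately show ?thesis by linarith
qed

section \<open>Right asymptotic classes\<close>

definition periodic :: "(int \<Rightarrow> 'a) \<Rightarrow> bool" where
  "periodic x \<longleftrightarrow> (\<exists>p>0. \<forall>i. x (i + p) = x i)"

definition special_times :: "(int \<Rightarrow> 'a) set \<Rightarrow> (int \<Rightarrow> 'a) \<Rightarrow> int set" where
  "special_times X x = {t. ray x t \<in> special_rays X}"

lemma right_asym_ray: "right_asym x y \<longleftrightarrow> (\<exists>t s. ray x t = ray y s)"
  by (simp add: right_asym_def ray_eq_iff)

lemma ray_shift: "ray x t = ray y s \<Longrightarrow> ray x (t + int d) = ray y (s + int d)"
proof -
  assume "ray x t = ray y s"
  hence h: "x (t + int k) = y (s + int k)" for k by (simp add: ray_eq_iff)
  show ?thesis unfolding ray_eq_iff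
  proof
    fix k show "x (t + int d + int k) = y (s + int d + int k)" using h[of "d + k"] by (simp add: algebra_simps)
  qed
qed

lemma ray_shift_any: "ray x t = ray y s \<Longrightarrow> \<exists>t' s'. t' \<ge> t0 \<and> s' \<ge> s0 \<and> ray x t' = ray y s'"
proof -
  assume e: "ray x t = ray y s"
  define d where "d = nat (max (t0 - t) (s0 - s))"
  have "ray x (t + int d) = ray y (s + int d)" using ray_shift[OF e] .
  moreover have "t + int d \<ge> t0" "s + int d \<ge> s0" by (auto simp: d_def)
  ultimately show ?thesis by blast
qed

lemma right_asym_refl: "right_asym x x"
  by (auto simp: right_asym_ray)

lemma right_asym_sym: "right_asym x y \<Longrightarrow> right_asym y x"
  by (metis right_asym_ray)

lemma right_asym_trans:
  assumes "right_asym x y" "right_asym y z" shows "right_asym x z"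
proof -
  obtain t s where e1: "ray x t = ray y s" using assms(1) by (auto simp: right_asym_ray)
  obtain s' r where e2: "ray y s' = ray z r" using assms(2) by (auto simp: right_asym_ray)
  show ?thesis
  proof (cases "s \<le> s'")
    case True
    have "ray x (t + int (nat (s' - s))) = ray y (s + int (nat (s' - s)))" by (rule ray_shift[OF e1])
    also have "s + int (nat (s' - s)) = s'" using True by simp
    finally show ?thesis using e2 by (auto simp: right_asym_ray)
  next
    case False
    have "ray y (s' + int (nat (s - s'))) = ray z (r + int (nat (s - s')))" by (rule ray_shift[OF e2])
    also have "s' + int (nat (s - s')) = s" using False by simp
    finally show ?thesis using e1 by (auto simp: right_asym_ray)
  qed
qed

lemma orbit_mem: "shift_by m x \<in> orbit x"
  unfolding orbit_def shift_by_def by blast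

lemma orbit_eq_iff: "orbit x = orbit y \<longleftrightarrow> (\<exists>n. y = shift_by n x)"
proof
  assume "orbit x = orbit y"
  moreover have "y \<in> orbit y" by (auto simp: orbit_def intro!: exI[of _ 0])
  ultimately have "y \<in> orbit x" by simp
  thus "\<exists>n. y = shift_by n x" by (auto simp: orbit_def shift_by_def)
next
  assume "\<exists>n. y = shift_by n x"
  then obtain n where y: "y = shift_by n x" by blast
  have "orbit (shift_by n x) = orbit x"
  proof (intro set_eqI iffI)
    fix z assume "z \<in> orbit (shift_by n x)"
    then obtain m where "z = shift_by m (shift_by n x)" by (auto simp: orbit_def shift_by_def)
    hence "z = shift_by (n + m) x" by simp
    thus "z \<in> orbit x" using orbit_mem by metis
  next
    fix z assume "z \<in> orbit x"
    then obtain m where "z = shift_by m x" by (auto simp: orbit_def shift_by_def)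
    hence "z = shift_by (m - n) (shift_by n x)" by simp
    thus "z \<in> orbit (shift_by n x)" using orbit_mem by metis
  qed
  thus "orbit x = orbit y" using y by simp
qed

lemma periodic_shift_by: "periodic (shift_by n x) \<longleftrightarrow> periodic x"
proof
  assume "periodic (shift_by n x)"
  then obtain p where p: "p > 0" "\<And>i. shift_by n x (i + p) = shift_by n x i" by (auto simp: periodic_def)
  have "x (i + p) = x i" for i using p(2)[of "i - n"] by (simp add: shift_by_def algebra_simps)
  thus "periodic x" using p(1) by (auto simp: periodic_def)
next
  assume "periodic x"
  then obtain p where p: "p > 0" "\<And>i. x (i + p) = x i" by (auto simp: periodic_def)
  have "shift_by n x (i + p) = shift_by n x i" for i using p(2)[of "i + n"] by (simp add: shift_by_def algebra_simps)
  thus "periodic (shift_by n x)" using p(1) by (auto simp: periodic_def)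
qed

lemma special_times_shift_by: "special_times X (shift_by n x) = {t. t + n \<in> special_times X x}"
  by (simp add: special_times_def ray_shift_by)

lemma periodic_ray: "\<forall>i. x (i + p) = x i \<Longrightarrow> ray x (t + p) = ray x t"
  by (auto simp: ray_def fun_eq_iff algebra_simps)

lemma eq_shift_by_if_rays_agree:
  assumes "\<And>d::nat. ray x (t - int d) = ray y (s - int d)"
  shows "y = shift_by (t - s) x"
proof
  fix i
  show "y i = shift_by (t - s) x i"
  proof (cases "i \<le> s")
    case True
    have "x (t - int (nat (s - i)) + int 0) = y (s - int (nat (s - i)) + int 0)"
      using fun_cong[OF assms[of "nat (s - i)"], of 0] unfolding ray_def .
    thus ?thesis using True by (simp add: shift_by_def algebra_simps)
  next
    case False
    have "x (t - int 0 + int (nat (i - s))) = y (s - int 0 + int (nat (i - s)))"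
      using fun_cong[OF assms[of 0], of "nat (i - s)"] unfolding ray_def .
    thus ?thesis using False by (simp add: shift_by_def algebra_simps)
  qed
qed

lemma eq_if_card_le_1: "card (S::'a::finite set) \<le> 1 \<Longrightarrow> a \<in> S \<Longrightarrow> b \<in> S \<Longrightarrow> a = b"
  by (metis One_nat_def card_le_Suc0_iff_eq finite)

lemma ray_eq_backwards:
  fixes X :: "(int \<Rightarrow> 'a::finite) set"
  assumes x: "x \<in> X" and y: "y \<in> X" and e: "ray x t = ray y s"
    and nb: "\<And>k. k < d \<Longrightarrow> ray x (t - int k) \<notin> special_rays X"
  shows "ray x (t - int d) = ray y (s - int d)"
  using nb
proof (induction d)
  case 0 then show ?case using e by simp
next
  case (Suc d)
  have IH: "ray x (t - int d) = ray y (s - int d)" using Suc by simp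
  let ?u = "ray x (t - int d)"
  have "?u \<notin> special_rays X" using Suc.prems by simp
  moreover have "is_ray X ?u" using is_ray_ray[OF x] .
  ultimately have c: "card (ray_left_ext X ?u) \<le> 1" by (simp add: special_rays_def)
  have "x (t - int d - 1) \<in> ray_left_ext X ?u" using ray_left_ext_ray[OF x] .
  moreover have "y (s - int d - 1) \<in> ray_left_ext X ?u" using ray_left_ext_ray[OF y] IH by metis
  ultimately have "x (t - int d - 1) = y (s - int d - 1)" using eq_if_card_le_1[OF c] by blast
  hence "ray x (t - int d - 1) = ray y (s - int d - 1)" using IH by (simp add: ray_pred)
  thus ?case by (simp add: algebra_simps)
qed

lemma special_ray_below_merge:
  fixes X :: "(int \<Rightarrow> 'a::finite) set"
  assumes u: "is_ray X u" and v: "is_ray X v"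
  shows "seq_drop j u = seq_drop j v \<Longrightarrow> u \<noteq> v \<Longrightarrow> \<exists>k<j. seq_drop (Suc k) u \<in> special_rays X"
proof (induction j)
  case 0 then show ?case by simp
next
  case (Suc j)
  show ?case
  proof (cases "seq_drop j u = seq_drop j v")
    case True then show ?thesis using Suc by (meson less_SucI)
  next
    case False
    have uj: "u j \<in> ray_left_ext X (seq_drop (Suc j) u)" by (rule ray_left_ext_seq_drop[OF u])
    have vj: "v j \<in> ray_left_ext X (seq_drop (Suc j) u)" using ray_left_ext_seq_drop[OF v, of j] Suc.prems(1) by simp
    have "u j \<noteq> v j" using False seq_cons_seq_drop[of u j] seq_cons_seq_drop[of v j] Suc.prems(1) by metis
    hence "card (ray_left_ext X (seq_drop (Suc j) u)) \<ge> 2" using uj vj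
      by (metis One_nat_def eq_if_card_le_1 not_less_eq_eq numeral_2_eq_2)
    moreover have "is_ray X (seq_drop (Suc j) u)" by (rule is_ray_seq_drop[OF u])
    ultimately show ?thesis by (auto simp: special_rays_def)
  qed
qed

lemma infinite_below:
  fixes S :: "int set"
  assumes "infinite S" "S \<subseteq> {..t0}" shows "\<exists>t\<in>S. t \<le> i"
proof (rule ccontr)
  assume "\<not> (\<exists>t\<in>S. t \<le> i)"
  hence "S \<subseteq> {i<..t0}" using assms(2) by force
  thus False using assms(1) finite_subset by blast
qed

lemma infinite_above:
  fixes S :: "int set"
  assumes "infinite S" "S \<subseteq> {t0..}" shows "\<exists>t\<in>S. t \<ge> i"
proof (rule ccontr)
  assume "\<not> (\<exists>t\<in>S. t \<ge> i)"
  hence "S \<subseteq> {t0..<i}" using assms(2) by force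
  thus False using assms(1) finite_subset by blast
qed

lemma special_times_has_min:
  fixes X :: "(int \<Rightarrow> 'a::finite) set"
  assumes fin_special: "finite (special_rays X)" and np: "\<not> periodic x" and ne: "t0 \<in> special_times X x"
  shows "\<exists>t\<in>special_times X x. \<forall>t'\<in>special_times X x. t \<le> t'"
proof (rule ccontr)
  assume nm: "\<not> ?thesis"
  define S where "S = special_times X x \<inter> {..t0}"
  have inf: "infinite S"
  proof
    assume fS: "finite S"
    have "S \<noteq> {}" using ne by (auto simp: S_def)
    hence "Min S \<in> special_times X x" "\<forall>t'\<in>special_times X x. Min S \<le> t'"
      using fS Min_in[OF fS] Min_le[OF fS] by (auto simp: S_def) (metis IntI Min_le atMost_iff fS le_cases order_trans)
    thus False using nm by blast
  qed
  have "finite (ray x ` S)" using fin_special by (rule finite_subset[rotated]) (auto simp: S_def special_times_def)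
  then obtain t1 where t1: "t1 \<in> S" and inf1: "infinite {t\<in>S. ray x t = ray x t1}"
    using pigeonhole_infinite[OF inf] by blast
  define S' where "S' = {t\<in>S. ray x t = ray x t1}"
  have S'_bounded: "S' \<subseteq> {..t0}" by (auto simp: S'_def S_def)
  obtain t2 where t2: "t2 \<in> S'" "t2 \<le> t1 - 1" using infinite_below[OF inf1[folded S'_def] S'_bounded] by blast
  define d where "d = t1 - t2"
  have d: "d > 0" using t2 by (simp add: d_def)
  have e12: "ray x t2 = ray x t1" using t2 by (simp add: S'_def)
  have "x (i + d) = x i" for i
  proof -
    obtain t where t: "t \<in> S'" "t \<le> i" using infinite_below[OF inf1[folded S'_def] S'_bounded] by blast
    have et: "ray x t = ray x t2" using t e12 by (simp add: S'_def)
    have "x i = x (t2 + (i - t))" using fun_cong[OF et, of "nat (i - t)"] t by (simp add: ray_def)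
    moreover have "x (i + d) = x (t2 + (i - t) + d)" using fun_cong[OF et, of "nat (i - t + d)"] t d
      by (simp add: ray_def algebra_simps)
    moreover have "x (t2 + (i - t) + d) = x (t2 + (i - t))"
      using fun_cong[OF e12, of "nat (i - t)"] t by (simp add: ray_def d_def algebra_simps)
    ultimately show ?thesis by simp
  qed
  hence "periodic x" using d by (auto simp: periodic_def)
  thus False using np by simp
qed

lemma special_times_has_max:
  fixes X :: "(int \<Rightarrow> 'a::finite) set"
  assumes ss: "is_shift_space X" and fin_special: "finite (special_rays X)" and x: "x \<in> X" and ne: "t0 \<in> special_times X x"
    and nz: "\<not> (\<exists>z\<in>X. periodic z \<and> right_asym x z)"
  shows "\<exists>t\<in>special_times X x. \<forall>t'\<in>special_times X x. t' \<le> t"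
proof (rule ccontr)
  assume nm: "\<not> ?thesis"
  define S where "S = special_times X x \<inter> {t0..}"
  have inf: "infinite S"
  proof
    assume fS: "finite S"
    have "S \<noteq> {}" using ne by (auto simp: S_def)
    hence "Max S \<in> special_times X x" "\<forall>t'\<in>special_times X x. t' \<le> Max S"
      using fS Max_in[OF fS] Max_ge[OF fS] by (auto simp: S_def) (metis IntI Max_ge atLeast_iff fS le_cases order_trans)
    thus False using nm by blast
  qed
  have "finite (ray x ` S)" using fin_special by (rule finite_subset[rotated]) (auto simp: S_def special_times_def)
  then obtain t1 where t1: "t1 \<in> S" and inf1: "infinite {t\<in>S. ray x t = ray x t1}"
    using pigeonhole_infinite[OF inf] by blast
  define S' where "S' = {t\<in>S. ray x t = ray x t1}"
  have S'_bounded: "S' \<subseteq> {t0..}" by (auto simp: S'_def S_def)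
  obtain t2 where t2: "t2 \<in> S'" "t2 \<ge> t1 + 1" using infinite_above[OF inf1[folded S'_def] S'_bounded] by blast
  have e12: "ray x t1 = ray x t2" using t2 by (simp add: S'_def)
  obtain z where z: "z \<in> X" "\<exists>p>0. \<forall>i. z (i + p) = z i" "ray z t1 = ray x t1"
    using periodic_point_if_ray_recurs[OF ss x e12] t2 by auto
  have "periodic z" using z(2) by (simp add: periodic_def)
  moreover have "right_asym x z" using z(3) by (metis right_asym_ray)
  ultimately show False using nz z(1) by blast
qed

lemma bij_betw_image_rel:
  assumes r: "\<And>x y. x \<in> S \<Longrightarrow> y \<in> S \<Longrightarrow> f x = f y \<longleftrightarrow> g x = g y"
  shows "bij_betw (\<lambda>v. g (SOME x. x \<in> S \<and> f x = v)) (f ` S) (g ` S)"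
proof -
  define h where "h v = g (SOME x. x \<in> S \<and> f x = v)" for v
  have hf: "h (f x) = g x" if "x \<in> S" for x
  proof -
    have "\<exists>x'. x' \<in> S \<and> f x' = f x" using that by blast
    hence "(SOME x'. x' \<in> S \<and> f x' = f x) \<in> S \<and> f (SOME x'. x' \<in> S \<and> f x' = f x) = f x"
      by (rule someI_ex)
    hence "g (SOME x'. x' \<in> S \<and> f x' = f x) = g x" using r that by blast
    thus ?thesis by (simp add: h_def)
  qed
  have "inj_on h (f ` S)"
    by (rule inj_onI) (auto simp: hf r)
  moreover have "h ` f ` S = g ` S" by (force simp: hf image_iff)
  ultimately show ?thesis unfolding h_def[symmetric] bij_betw_def by simp
qed

definition class_special_rays :: "(int \<Rightarrow> 'a) set \<Rightarrow> (int \<Rightarrow> 'a) \<Rightarrow> (nat \<Rightarrow> 'a) set" where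
  "class_special_rays X x = {b \<in> special_rays X. \<exists>y\<in>asym_eqclass X x. ray y 0 = b}"

text \<open>A non-periodic point of C either never
  meets a left special ray, or has a first time t where it does; in the latter case its orbit is
  coded by the pair (x[t,\<infinity>), x(t-1)). The pairs (b, a) with b special and a \<in> L(b) that are not
  such codes are exactly those whose backward continuation meets a further special ray, and they
  correspond to the non-terminal special rays via the next special ray above. Since exactly one
  orbit is periodic, or plain, or there is exactly one terminal ray, the class has
  1 + \<Sum>(|L(b)| - 1) orbits, summed over the special rays b starting in C.\<close>

locale asym_class =
  fixes X :: "(int \<Rightarrow> 'a::finite) set" and x0 :: "int \<Rightarrow> 'a"
  assumes ss: "is_shift_space X" and fin_special: "finite (special_rays X)" and x0: "x0 \<in> X"
begin

abbreviation "C \<equiv> asym_eqclass X x0"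

abbreviation class_rays :: "(nat \<Rightarrow> 'a) set" where
  "class_rays \<equiv> class_special_rays X x0"

definition special_pts :: "(int \<Rightarrow> 'a) set" where
  "special_pts = {x\<in>C. \<not> periodic x \<and> special_times X x \<noteq> {}}"

definition periodic_orbits :: "(int \<Rightarrow> 'a) set set" where
  "periodic_orbits = orbit ` {x\<in>C. periodic x}"

definition plain_orbits :: "(int \<Rightarrow> 'a) set set" where
  "plain_orbits = orbit ` {x\<in>C. \<not> periodic x \<and> special_times X x = {}}"

definition special_orbits :: "(int \<Rightarrow> 'a) set set" where
  "special_orbits = orbit ` special_pts"

definition nonterminal_rays :: "(nat \<Rightarrow> 'a) set" where
  "nonterminal_rays = {b\<in>class_rays. \<exists>j\<ge>1. seq_drop j b \<in> special_rays X}"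

definition terminal_rays :: "(nat \<Rightarrow> 'a) set" where
  "terminal_rays = class_rays - nonterminal_rays"

definition ext_pairs :: "((nat \<Rightarrow> 'a) \<times> 'a) set" where
  "ext_pairs = (SIGMA b:class_rays. ray_left_ext X b)"

definition first_ext_pairs :: "((nat \<Rightarrow> 'a) \<times> 'a) set" where
  "first_ext_pairs = {(b,a)\<in>ext_pairs.
     \<exists>y\<in>X. ray y 0 = b \<and> y (-1) = a \<and> (\<forall>t<0. ray y t \<notin> special_rays X)}"

definition first_special_time :: "(int \<Rightarrow> 'a) \<Rightarrow> int" where
  "first_special_time x = (LEAST t. t \<in> special_times X x)"

definition orbit_code :: "(int \<Rightarrow> 'a) \<Rightarrow> (nat \<Rightarrow> 'a) \<times> 'a" where
  "orbit_code x = (ray x (first_special_time x), x (first_special_time x - 1))"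

definition next_special :: "(nat \<Rightarrow> 'a) \<Rightarrow> nat" where
  "next_special b = (LEAST j. 1 \<le> j \<and> seq_drop j b \<in> special_rays X)"

definition predecessor_pair :: "(nat \<Rightarrow> 'a) \<Rightarrow> (nat \<Rightarrow> 'a) \<times> 'a" where
  "predecessor_pair b = (seq_drop (next_special b) b, b (next_special b - 1))"

lemma mem_class: "y \<in> C \<longleftrightarrow> y \<in> X \<and> right_asym x0 y"
  by (simp add: asym_eqclass_def)

lemma x0_class: "x0 \<in> C" using x0 right_asym_refl by (simp add: mem_class)

lemma class_right_asym: "y \<in> C \<Longrightarrow> z \<in> C \<Longrightarrow> right_asym y z"
  by (meson mem_class right_asym_sym right_asym_trans)

lemma class_ray: "y \<in> C \<Longrightarrow> z \<in> X \<Longrightarrow> ray y t = ray z s \<Longrightarrow> z \<in> C"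
  by (meson mem_class right_asym_ray right_asym_trans)

lemma class_shift_by: "y \<in> C \<Longrightarrow> shift_by n y \<in> C"
  using class_ray[of y "shift_by n y" n 0] shift_by_mem[OF ss] by (simp add: mem_class ray_shift_by)

lemma class_mem_X: "y \<in> C \<Longrightarrow> y \<in> X" by (simp add: mem_class)

lemma class_rays_realised: "b \<in> class_rays \<Longrightarrow> \<exists>y\<in>C. ray y 0 = b" by (auto simp: class_special_rays_def)

lemma class_rays_class: "b \<in> class_rays \<Longrightarrow> y \<in> X \<Longrightarrow> ray y 0 = b \<Longrightarrow> y \<in> C"
  using class_rays_realised class_ray by metis

lemma class_rays_special: "b \<in> class_rays \<Longrightarrow> b \<in> special_rays X" by (simp add: class_special_rays_def)

lemma finite_class_rays: "finite class_rays" using fin_special by (rule finite_subset[rotated]) (auto simp: class_special_rays_def)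

lemma finite_ext_pairs: "finite ext_pairs" unfolding ext_pairs_def using finite_class_rays by auto

lemma first_special_time_least:
  assumes x: "x \<in> special_pts"
  shows "first_special_time x \<in> special_times X x" and "\<And>t. t \<in> special_times X x \<Longrightarrow> first_special_time x \<le> t"
proof -
  obtain t0 where "t0 \<in> special_times X x" and np: "\<not> periodic x" using x by (auto simp: special_pts_def)
  then obtain t where t: "t \<in> special_times X x" "\<forall>t'\<in>special_times X x. t \<le> t'" using special_times_has_min[OF fin_special] by blast
  have "first_special_time x = t" unfolding first_special_time_def by (rule Least_equality) (use t in auto)
  thus "first_special_time x \<in> special_times X x" "\<And>t. t \<in> special_times X x \<Longrightarrow> first_special_time x \<le> t" using t by auto
qed

lemma first_special_time_shift_by:
  assumes x: "x \<in> special_pts" shows "first_special_time (shift_by n x) = first_special_time x - n"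
  unfolding first_special_time_def[of "shift_by n x"]
proof (rule Least_equality)
  show "first_special_time x - n \<in> special_times X (shift_by n x)" using first_special_time_least(1)[OF x] by (simp add: special_times_shift_by)
  fix t assume "t \<in> special_times X (shift_by n x)"
  hence "t + n \<in> special_times X x" by (simp add: special_times_shift_by)
  thus "first_special_time x - n \<le> t" using first_special_time_least(2)[OF x] by force
qed

lemma orbit_code_shift_by: assumes x: "x \<in> special_pts" shows "orbit_code (shift_by n x) = orbit_code x"
  unfolding orbit_code_def first_special_time_shift_by[OF x] ray_shift_by by (simp add: shift_by_def)

lemma orbit_code_first_ext_pairs: "x \<in> special_pts \<Longrightarrow> orbit_code x \<in> first_ext_pairs"
proof -
  assume x: "x \<in> special_pts"
  define y where "y = shift_by (first_special_time x) x"
  have xC: "x \<in> C" using x by (simp add: special_pts_def)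
  have yX: "y \<in> X" using shift_by_mem[OF ss class_mem_X[OF xC]] by (simp add: y_def)
  have r0: "ray y 0 = ray x (first_special_time x)" by (simp add: y_def ray_shift_by)
  have y1: "y (-1) = x (first_special_time x - 1)" by (simp add: y_def shift_by_def)
  have nb: "\<forall>t<0. ray y t \<notin> special_rays X"
  proof (intro allI impI)
    fix t :: int assume "t < 0"
    hence "\<not> first_special_time x \<le> t + first_special_time x" by simp
    hence "t + first_special_time x \<notin> special_times X x" using first_special_time_least(2)[OF x] by blast
    thus "ray y t \<notin> special_rays X" by (simp add: y_def ray_shift_by special_times_def)
  qed
  have b_special: "ray x (first_special_time x) \<in> special_rays X" using first_special_time_least(1)[OF x] by (simp add: special_times_def)
  have b_class: "ray x (first_special_time x) \<in> class_rays" using b_special class_shift_by[OF xC, of "first_special_time x"] r0 by (auto simp: class_special_rays_def y_def)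
  have "x (first_special_time x - 1) \<in> ray_left_ext X (ray x (first_special_time x))" by (rule ray_left_ext_ray[OF class_mem_X[OF xC]])
  hence "orbit_code x \<in> ext_pairs" using b_class by (simp add: ext_pairs_def orbit_code_def)
  thus "orbit_code x \<in> first_ext_pairs" using yX r0 y1 nb by (auto simp: first_ext_pairs_def orbit_code_def)
qed

lemma first_ext_pairs_orbit_code: "p \<in> first_ext_pairs \<Longrightarrow> \<exists>x\<in>special_pts. orbit_code x = p"
proof -
  assume p: "p \<in> first_ext_pairs"
  then obtain b a y where pba: "p = (b,a)" and b_class: "b \<in> class_rays" and yX: "y \<in> X" and r0: "ray y 0 = b"
    and y1: "y (-1) = a" and nb: "\<forall>t<0. ray y t \<notin> special_rays X" by (auto simp: first_ext_pairs_def ext_pairs_def)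
  have yC: "y \<in> C" by (rule class_rays_class[OF b_class yX r0])
  have b_special: "b \<in> special_rays X" using class_rays_special[OF b_class] .
  have np: "\<not> periodic y"
  proof
    assume "periodic y"
    then obtain q where q: "q > 0" "\<forall>i. y (i + q) = y i" by (auto simp: periodic_def)
    have "ray y (- q + q) = ray y (- q)" by (rule periodic_ray[OF q(2)])
    hence "ray y (- q) \<in> special_rays X" using r0 b_special by simp
    thus False using nb q(1) by auto
  qed
  have no_times: "0 \<in> special_times X y" using r0 b_special by (simp add: special_times_def)
  have y_special: "y \<in> special_pts" using yC np no_times by (auto simp: special_pts_def)
  have "first_special_time y = 0" unfolding first_special_time_def
    by (rule Least_equality) (use no_times nb in \<open>auto simp: special_times_def not_le[symmetric]\<close>)
  hence "orbit_code y = p" using r0 y1 pba by (simp add: orbit_code_def)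
  thus ?thesis using y_special by blast
qed

lemma orbit_code_eq_iff:
  assumes x: "x \<in> special_pts" and y: "y \<in> special_pts"
  shows "orbit_code x = orbit_code y \<longleftrightarrow> orbit x = orbit y"
proof
  assume "orbit x = orbit y"
  then obtain n where "y = shift_by n x" by (auto simp: orbit_eq_iff)
  thus "orbit_code x = orbit_code y" using orbit_code_shift_by[OF x] by simp
next
  assume e: "orbit_code x = orbit_code y"
  define x' where "x' = shift_by (first_special_time x) x"
  define y' where "y' = shift_by (first_special_time y) y"
  have xX: "x' \<in> X" using x shift_by_mem[OF ss] by (auto simp: x'_def special_pts_def class_mem_X)
  have yX: "y' \<in> X" using y shift_by_mem[OF ss] by (auto simp: y'_def special_pts_def class_mem_X)
  have e0: "ray x (first_special_time x) = ray y (first_special_time y)" "x (first_special_time x - 1) = y (first_special_time y - 1)" using e by (simp_all add: orbit_code_def)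
  have "ray x' 0 = ray y' 0" unfolding x'_def y'_def ray_shift_by using e0 by simp
  moreover have "x' (-1) = y' (-1)" unfolding x'_def y'_def shift_by_def using e0 by (simp add: algebra_simps)
  ultimately have "ray x' 0 = ray y' 0" "x' (-1) = y' (-1)" .
  hence e1: "ray x' (0 - 1) = ray y' (0 - 1)" unfolding ray_pred by simp
  have nbx: "ray x' t \<notin> special_rays X" if "t < 0" for t
  proof -
    have "\<not> first_special_time x \<le> t + first_special_time x" using that by simp
    hence "t + first_special_time x \<notin> special_times X x" using first_special_time_least(2)[OF x] by blast
    thus ?thesis by (simp add: x'_def ray_shift_by special_times_def)
  qed
  have all: "ray x' (-1 - int d) = ray y' (-1 - int d)" for d
    using ray_eq_backwards[OF xX yX e1[simplified], of d] nbx by (simp add: algebra_simps)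
  have "y' = shift_by (-1 - (-1)) x'" by (rule eq_shift_by_if_rays_agree) (use all in auto)
  hence "y' = x'" by simp
  hence "y = shift_by (first_special_time x - first_special_time y) x" unfolding x'_def y'_def
    by (metis add.commute add_0 diff_add_cancel shift_by_0 shift_by_shift_by)
  thus "orbit x = orbit y" by (auto simp: orbit_eq_iff)
qed

lemma orbit_code_image: "orbit_code ` special_pts = first_ext_pairs"
  using orbit_code_first_ext_pairs first_ext_pairs_orbit_code by blast

lemma card_special_orbits: "card special_orbits = card first_ext_pairs" and finite_special_orbits: "finite special_orbits"
proof -
  have b: "bij_betw (\<lambda>v. orbit_code (SOME x. x \<in> special_pts \<and> orbit x = v)) (orbit ` special_pts) (orbit_code ` special_pts)"
    by (rule bij_betw_image_rel) (simp add: orbit_code_eq_iff)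
  show "card special_orbits = card first_ext_pairs" using bij_betw_same_card[OF b] by (simp add: special_orbits_def orbit_code_image)
  have "finite first_ext_pairs" using finite_ext_pairs by (rule finite_subset[rotated]) (auto simp: first_ext_pairs_def)
  thus "finite special_orbits" using bij_betw_finite[OF b] by (simp add: special_orbits_def orbit_code_image)
qed

lemma ray_int_eq_seq_drop: "ray z 0 = b \<Longrightarrow> ray z (int i) = seq_drop i b"
  using seq_drop_ray[of i z 0] by simp

lemma val_int_eq_nth: "ray z 0 = b \<Longrightarrow> z (int i) = b i"
  by (auto simp: ray_def)

lemma next_special_least:
  assumes b: "b \<in> nonterminal_rays"
  shows "1 \<le> next_special b" "seq_drop (next_special b) b \<in> special_rays X" "\<And>i. 1 \<le> i \<Longrightarrow> i < next_special b \<Longrightarrow> seq_drop i b \<notin> special_rays X"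
proof -
  have ex: "\<exists>j. 1 \<le> j \<and> seq_drop j b \<in> special_rays X" using b by (auto simp: nonterminal_rays_def)
  show "1 \<le> next_special b" "seq_drop (next_special b) b \<in> special_rays X" using LeastI_ex[OF ex] by (auto simp: next_special_def)
  show "\<And>i. 1 \<le> i \<Longrightarrow> i < next_special b \<Longrightarrow> seq_drop i b \<notin> special_rays X" using not_less_Least by (auto simp: next_special_def)
qed

lemma nonterminal_class_rays: "b \<in> nonterminal_rays \<Longrightarrow> b \<in> class_rays" by (simp add: nonterminal_rays_def)

lemma predecessor_pair_mem:
  assumes b: "b \<in> nonterminal_rays" shows "predecessor_pair b \<in> ext_pairs - first_ext_pairs"
proof -
  define j where "j = next_special b"
  have j1: "1 \<le> j" and jB: "seq_drop j b \<in> special_rays X" using next_special_least[OF b] by (auto simp: j_def)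
  obtain z where zC: "z \<in> C" and z0: "ray z 0 = b" using class_rays_realised[OF nonterminal_class_rays[OF b]] by blast
  have zX: "z \<in> X" using class_mem_X[OF zC] .
  have rzj: "ray z (int j) = seq_drop j b" by (rule ray_int_eq_seq_drop[OF z0])
  have "ray (shift_by (int j) z) 0 = seq_drop j b" using rzj by (simp add: ray_shift_by)
  hence b'_class: "seq_drop j b \<in> class_rays" using jB class_shift_by[OF zC, of "int j"] unfolding class_special_rays_def by blast
  have zj1: "z (int j - 1) = b (j - 1)" using val_int_eq_nth[OF z0, of "j - 1"] j1 by (simp add: of_nat_diff)
  have "z (int j - 1) \<in> ray_left_ext X (ray z (int j))" by (rule ray_left_ext_ray[OF zX])
  hence aL: "b (j - 1) \<in> ray_left_ext X (seq_drop j b)" using zj1 rzj by simp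
  have in_pairs: "predecessor_pair b \<in> ext_pairs" using b'_class aL by (simp add: ext_pairs_def predecessor_pair_def j_def)
  have "predecessor_pair b \<notin> first_ext_pairs"
  proof
    assume "predecessor_pair b \<in> first_ext_pairs"
    then obtain y where yX: "y \<in> X" and y0: "ray y 0 = seq_drop j b" and y1: "y (-1) = b (j - 1)"
      and nb: "\<forall>t<0. ray y t \<notin> special_rays X" by (auto simp: first_ext_pairs_def predecessor_pair_def j_def)
    define y' where "y' = shift_by (int j) z"
    have y'X: "y' \<in> X" using shift_by_mem[OF ss zX] by (simp add: y'_def)
    have y'0: "ray y' 0 = seq_drop j b" using rzj by (simp add: y'_def ray_shift_by)
    have y'1: "y' (-1) = b (j - 1)" using zj1 by (simp add: y'_def shift_by_def)
    have e1: "ray y (0 - 1) = ray y' (0 - 1)" unfolding ray_pred using y0 y'0 y1 y'1 by simp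
    have "ray y (0 - 1 - int (j - 1)) = ray y' (0 - 1 - int (j - 1))"
      by (rule ray_eq_backwards[OF yX y'X e1]) (use nb in auto)
    moreover have "0 - 1 - int (j - 1) = - int j" using j1 by (simp add: of_nat_diff)
    ultimately have "ray y (- int j) = ray z 0" by (simp add: y'_def ray_shift_by)
    hence "ray y (- int j) \<in> special_rays X" using z0 class_rays_special[OF nonterminal_class_rays[OF b]] by simp
    thus False using nb j1 by auto
  qed
  thus ?thesis using in_pairs by simp
qed

lemma predecessor_pair_inj_aux:
  assumes b1: "b1 \<in> nonterminal_rays" and b2: "b2 \<in> nonterminal_rays" and e: "predecessor_pair b1 = predecessor_pair b2" and le: "next_special b1 \<le> next_special b2"
  shows "b1 = b2"
proof -
  define j1 where "j1 = next_special b1"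
  define j2 where "j2 = next_special b2"
  have j11: "1 \<le> j1" and j21: "1 \<le> j2" using next_special_least[OF b1] next_special_least[OF b2] by (auto simp: j1_def j2_def)
  obtain z1 where z1C: "z1 \<in> C" and z10: "ray z1 0 = b1" using class_rays_realised[OF nonterminal_class_rays[OF b1]] by blast
  obtain z2 where z2C: "z2 \<in> C" and z20: "ray z2 0 = b2" using class_rays_realised[OF nonterminal_class_rays[OF b2]] by blast
  define y1 where "y1 = shift_by (int j1) z1"
  define y2 where "y2 = shift_by (int j2) z2"
  have y1X: "y1 \<in> X" using shift_by_mem[OF ss class_mem_X[OF z1C]] by (simp add: y1_def)
  have y2X: "y2 \<in> X" using shift_by_mem[OF ss class_mem_X[OF z2C]] by (simp add: y2_def)
  have y10: "ray y1 0 = seq_drop j1 b1" using ray_int_eq_seq_drop[OF z10] by (simp add: y1_def ray_shift_by)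
  have y20: "ray y2 0 = seq_drop j2 b2" using ray_int_eq_seq_drop[OF z20] by (simp add: y2_def ray_shift_by)
  have y11: "y1 (-1) = b1 (j1 - 1)" using val_int_eq_nth[OF z10, of "j1 - 1"] j11 by (simp add: y1_def shift_by_def of_nat_diff)
  have y21: "y2 (-1) = b2 (j2 - 1)" using val_int_eq_nth[OF z20, of "j2 - 1"] j21 by (simp add: y2_def shift_by_def of_nat_diff)
  have ce: "seq_drop j1 b1 = seq_drop j2 b2" "b1 (j1 - 1) = b2 (j2 - 1)" using e by (auto simp: predecessor_pair_def j1_def j2_def)
  have e1: "ray y1 (0 - 1) = ray y2 (0 - 1)" unfolding ray_pred using y10 y20 y11 y21 ce by simp
  have nb: "ray y1 (0 - 1 - int k) \<notin> special_rays X" if "k < j1 - 1" for k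
  proof -
    have "ray y1 (0 - 1 - int k) = ray z1 (int (j1 - 1 - k))" using that by (simp add: y1_def ray_shift_by of_nat_diff algebra_simps)
    also have "\<dots> = seq_drop (j1 - 1 - k) b1" by (rule ray_int_eq_seq_drop[OF z10])
    finally show ?thesis using next_special_least(3)[OF b1, of "j1 - 1 - k"] that by (simp add: j1_def)
  qed
  have "ray y1 (0 - 1 - int (j1 - 1)) = ray y2 (0 - 1 - int (j1 - 1))"
    by (rule ray_eq_backwards[OF y1X y2X e1]) (use nb in auto)
  moreover have "0 - 1 - int (j1 - 1) = - int j1" using j11 by (simp add: of_nat_diff)
  ultimately have "ray z1 0 = ray z2 (int (j2 - j1))" using le
    by (simp add: y1_def y2_def ray_shift_by j1_def j2_def of_nat_diff)
  hence eb: "b1 = seq_drop (j2 - j1) b2" using z10 ray_int_eq_seq_drop[OF z20] by simp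
  show ?thesis
  proof (cases "j1 < j2")
    case True
    have "seq_drop (j2 - j1) b2 \<notin> special_rays X" using next_special_least(3)[OF b2, of "j2 - j1"] True j11 by (simp add: j2_def)
    moreover have "b1 \<in> special_rays X" using class_rays_special[OF nonterminal_class_rays[OF b1]] .
    ultimately show ?thesis using eb by simp
  next
    case False
    hence "j2 - j1 = 0" by simp
    thus ?thesis using eb by simp
  qed
qed

lemma inj_on_predecessor_pair: "inj_on predecessor_pair nonterminal_rays"
  by (rule inj_onI) (metis predecessor_pair_inj_aux nat_le_linear)

lemma predecessor_pair_surj:
  assumes p: "p \<in> ext_pairs - first_ext_pairs" shows "p \<in> predecessor_pair ` nonterminal_rays"
proof -
  obtain b a where pba: "p = (b,a)" and b_class: "b \<in> class_rays" and aL: "a \<in> ray_left_ext X b" using p by (auto simp: ext_pairs_def)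
  obtain y where yX: "y \<in> X" and y0: "ray y 0 = b" and y1: "y (-1) = a" using ray_left_ext_realised[OF ss aL] by blast
  have yC: "y \<in> C" by (rule class_rays_class[OF b_class yX y0])
  have "\<not> (\<forall>t<0. ray y t \<notin> special_rays X)" using p pba yX y0 y1 by (auto simp: first_ext_pairs_def)
  then obtain t where t: "t < 0" "ray y t \<in> special_rays X" by blast
  have ex: "\<exists>j. 1 \<le> j \<and> ray y (- int j) \<in> special_rays X" using t by (intro exI[of _ "nat (-t)"]) auto
  define J where "J = (LEAST j. 1 \<le> j \<and> ray y (- int j) \<in> special_rays X)"
  have J1: "1 \<le> J" and JB: "ray y (- int J) \<in> special_rays X" using LeastI_ex[OF ex] by (auto simp: J_def)
  have Jmin: "\<And>j. 1 \<le> j \<Longrightarrow> ray y (- int j) \<in> special_rays X \<Longrightarrow> J \<le> j" by (simp add: J_def Least_le)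
  define b' where "b' = ray y (- int J)"
  have sigb': "seq_drop i b' = ray y (int i - int J)" for i by (simp add: b'_def seq_drop_ray algebra_simps)
  have "ray (shift_by (- int J) y) 0 = b'" by (simp add: ray_shift_by b'_def)
  hence b'_class: "b' \<in> class_rays" using JB class_shift_by[OF yC, of "- int J"] unfolding class_special_rays_def b'_def by blast
  have sJ: "seq_drop J b' = b" using sigb'[of J] y0 by simp
  have b_special: "b \<in> special_rays X" using class_rays_special[OF b_class] .
  have b'_nonterminal: "b' \<in> nonterminal_rays" using b'_class sJ b_special J1 by (auto simp: nonterminal_rays_def)
  have next_special_eq: "next_special b' = J" unfolding next_special_def
  proof (rule Least_equality)
    show "1 \<le> J \<and> seq_drop J b' \<in> special_rays X" using J1 sJ b_special by simp
  next
    fix i assume i: "1 \<le> i \<and> seq_drop i b' \<in> special_rays X"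
    show "J \<le> i"
    proof (rule ccontr)
      assume "\<not> J \<le> i"
      hence "ray y (- int (J - i)) \<in> special_rays X" using i sigb'[of i] by (simp add: of_nat_diff)
      hence "J \<le> J - i" using Jmin[of "J - i"] \<open>\<not> J \<le> i\<close> by simp
      thus False using i \<open>\<not> J \<le> i\<close> by linarith
    qed
  qed
  have "b' (J - 1) = y (-1)" using J1 by (simp add: b'_def ray_def of_nat_diff)
  hence "predecessor_pair b' = p" using next_special_eq sJ y1 pba by (simp add: predecessor_pair_def)
  thus ?thesis using b'_nonterminal by blast
qed

lemma card_ext_pairs_diff: "card (ext_pairs - first_ext_pairs) = card nonterminal_rays"
proof -
  have "bij_betw predecessor_pair nonterminal_rays (ext_pairs - first_ext_pairs)"
    unfolding bij_betw_def using predecessor_pair_mem inj_on_predecessor_pair predecessor_pair_surj by blast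
  thus ?thesis by (simp add: bij_betw_same_card)
qed

lemma periodicE:
  assumes "periodic x" obtains p where "p > 0" "\<And>i. x (i + p) = x i"
  using assms by (auto simp: periodic_def)

lemma periodic_same_orbit:
  assumes xC: "x \<in> C" and yC: "y \<in> C" and px: "periodic x" and py: "periodic y"
  shows "\<exists>n. y = shift_by n x"
proof -
  obtain p where p: "p > 0" "\<And>i. x (i + p) = x i" using periodicE[OF px] by blast
  obtain q where q: "q > 0" "\<And>i. y (i + q) = y i" using periodicE[OF py] by blast
  define Q where "Q = p * q"
  have Q: "Q > 0" using p q by (simp add: Q_def)
  have xQ: "x (i + Q) = x i" for i using periodic_mult[of x p i "nat q"] p q by (simp add: Q_def mult.commute)
  have yQ: "y (i + Q) = y i" for i using periodic_mult[of y q i "nat p"] p q by (simp add: Q_def)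
  obtain t s where e: "ray x t = ray y s" using class_right_asym[OF xC yC] by (auto simp: right_asym_ray)
  have "y i = x (i + (t - s))" for i
  proof -
    define m where "m = nat (s - i)"
    have "int m * 1 \<le> int m * Q" using Q by (intro mult_left_mono) auto
    hence ge: "i + int m * Q \<ge> s" by (simp add: m_def split: if_splits)
    have "y i = y (i + int m * Q)" using periodic_mult[of y Q i m] yQ by simp
    also have "\<dots> = y (s + int (nat (i + int m * Q - s)))" using ge by simp
    also have "\<dots> = x (t + int (nat (i + int m * Q - s)))" by (metis e ray_eq_iff)
    also have "\<dots> = x ((i + (t - s)) + int m * Q)" using ge by (simp add: algebra_simps)
    also have "\<dots> = x (i + (t - s))" using periodic_mult[of x Q "i + (t - s)" m] xQ by simp
    finally show ?thesis .
  qed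
  hence "y = shift_by (t - s) x" by (auto simp: shift_by_def)
  thus ?thesis by blast
qed

lemma plain_same_orbit:
  assumes xC: "x \<in> C" and no_times: "special_times X x = {}" and yC: "y \<in> C"
  shows "\<exists>n. y = shift_by n x"
proof -
  obtain t s where e: "ray x t = ray y s" using class_right_asym[OF xC yC] by (auto simp: right_asym_ray)
  have "ray x (t - int d) = ray y (s - int d)" for d
    by (rule ray_eq_backwards[OF class_mem_X[OF xC] class_mem_X[OF yC] e]) (use no_times in \<open>auto simp: special_times_def\<close>)
  hence "y = shift_by (t - s) x" by (rule eq_shift_by_if_rays_agree)
  thus ?thesis by blast
qed

lemma plain_class_rays_empty:
  assumes xC: "x \<in> C" and no_times: "special_times X x = {}" shows "class_rays = {}"
proof (rule ccontr)
  assume "class_rays \<noteq> {}"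
  then obtain b where b: "b \<in> class_rays" by blast
  obtain y where yC: "y \<in> C" and y0: "ray y 0 = b" using class_rays_realised[OF b] by blast
  obtain n where "y = shift_by n x" using plain_same_orbit[OF xC no_times yC] by blast
  hence "ray x n = b" using y0 by (simp add: ray_shift_by)
  hence "n \<in> special_times X x" using class_rays_special[OF b] by (simp add: special_times_def)
  thus False using no_times by simp
qed

lemma terminal_class_rays: "b \<in> terminal_rays \<Longrightarrow> b \<in> class_rays" by (simp add: terminal_rays_def)

lemma terminal_not_special: "b \<in> terminal_rays \<Longrightarrow> 1 \<le> j \<Longrightarrow> seq_drop j b \<notin> special_rays X"
  by (auto simp: terminal_rays_def nonterminal_rays_def)

lemma special_is_ray: "b \<in> special_rays X \<Longrightarrow> is_ray X b" by (simp add: special_rays_def)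

lemma periodic_terminal_empty:
  assumes zC: "z \<in> C" and pz: "periodic z" shows "terminal_rays = {}"
proof (rule ccontr)
  assume "terminal_rays \<noteq> {}"
  then obtain b where b: "b \<in> terminal_rays" by blast
  obtain y where yC: "y \<in> C" and y0: "ray y 0 = b" using class_rays_realised[OF terminal_class_rays[OF b]] by blast
  obtain t s where "ray y t = ray z s" using class_right_asym[OF yC zC] by (auto simp: right_asym_ray)
  then obtain t s where e: "ray y t = ray z s" and t0: "t \<ge> 0" using ray_shift_any[of y _ z _ 0 0] by blast
  define i where "i = nat t"
  have sb: "seq_drop i b = ray z s" using ray_int_eq_seq_drop[OF y0, of i] e t0 by (simp add: i_def)
  define v where "v = ray z (s - int i)"
  have sv: "seq_drop i v = ray z s" by (simp add: v_def seq_drop_ray)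
  have rb: "is_ray X b" using special_is_ray[OF class_rays_special[OF terminal_class_rays[OF b]]] .
  have rv: "is_ray X v" using is_ray_ray[OF class_mem_X[OF zC]] by (simp add: v_def)
  show False
  proof (cases "v = b")
    case False
    then obtain k where "seq_drop (Suc k) b \<in> special_rays X" using special_ray_below_merge[OF rb rv, of i] sb sv by metis
    thus False using terminal_not_special[OF b, of "Suc k"] by simp
  next
    case True
    obtain p where p: "p > 0" "\<And>i. z (i + p) = z i" using periodicE[OF pz] by blast
    have "seq_drop (nat p) v = ray z (s - int i + p)" using p(1) by (simp add: v_def seq_drop_ray)
    also have "\<dots> = v" unfolding v_def by (rule periodic_ray) (use p in auto)
    finally have "seq_drop (nat p) b = b" using True by simp
    moreover have "b \<in> special_rays X" using class_rays_special[OF terminal_class_rays[OF b]] .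
    moreover have "1 \<le> nat p" using p(1) by (simp add: Suc_le_eq)
    ultimately show False using terminal_not_special[OF b, of "nat p"] by simp
  qed
qed

lemma terminal_rays_unique_aux:
  assumes b1: "b1 \<in> terminal_rays" and b2: "b2 \<in> terminal_rays" and e: "seq_drop i b1 = seq_drop j b2" and le: "j \<le> i"
  shows "b1 = b2"
proof -
  define u where "u = seq_drop (i - j) b1"
  have su: "seq_drop j u = seq_drop j b2" using e le by (simp add: u_def)
  have r1: "is_ray X b1" using special_is_ray[OF class_rays_special[OF terminal_class_rays[OF b1]]] .
  have r2: "is_ray X b2" using special_is_ray[OF class_rays_special[OF terminal_class_rays[OF b2]]] .
  have ru: "is_ray X u" using is_ray_seq_drop[OF r1] by (simp add: u_def)
  show ?thesis
  proof (cases "u = b2")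
    case False
    then obtain k where "seq_drop (Suc k) b2 \<in> special_rays X" using special_ray_below_merge[OF r2 ru, of j] su by metis
    thus ?thesis using terminal_not_special[OF b2, of "Suc k"] by simp
  next
    case True
    show ?thesis
    proof (cases "j < i")
      case True
      have "seq_drop (i - j) b1 \<in> special_rays X" using \<open>u = b2\<close> class_rays_special[OF terminal_class_rays[OF b2]] by (simp add: u_def)
      thus ?thesis using terminal_not_special[OF b1, of "i - j"] True by simp
    next
      case False
      hence "i = j" using le by simp
      thus ?thesis using \<open>u = b2\<close> by (simp add: u_def)
    qed
  qed
qed

lemma terminal_rays_unique: "b1 \<in> terminal_rays \<Longrightarrow> b2 \<in> terminal_rays \<Longrightarrow> b1 = b2"
proof -
  assume b1: "b1 \<in> terminal_rays" and b2: "b2 \<in> terminal_rays"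
  obtain y1 where y1C: "y1 \<in> C" and y10: "ray y1 0 = b1" using class_rays_realised[OF terminal_class_rays[OF b1]] by blast
  obtain y2 where y2C: "y2 \<in> C" and y20: "ray y2 0 = b2" using class_rays_realised[OF terminal_class_rays[OF b2]] by blast
  obtain t s where "ray y1 t = ray y2 s" using class_right_asym[OF y1C y2C] by (auto simp: right_asym_ray)
  then obtain t s where e: "ray y1 t = ray y2 s" and t0: "t \<ge> 0" and s0: "s \<ge> 0"
    using ray_shift_any[of y1 _ y2 _ 0 0] by blast
  have "seq_drop (nat t) b1 = seq_drop (nat s) b2" using ray_int_eq_seq_drop[OF y10, of "nat t"] ray_int_eq_seq_drop[OF y20, of "nat s"] e t0 s0 by simp
  thus "b1 = b2" using terminal_rays_unique_aux[OF b1 b2] terminal_rays_unique_aux[OF b2 b1] by (metis nat_le_linear)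
qed

lemma terminal_rays_nonempty:
  assumes nP: "\<forall>x\<in>C. \<not> periodic x" and n0: "\<forall>x\<in>C. \<not> periodic x \<longrightarrow> special_times X x \<noteq> {}"
  shows "terminal_rays \<noteq> {}"
proof -
  obtain t0 where t0: "t0 \<in> special_times X x0" using nP n0 x0_class by blast
  have nz: "\<not> (\<exists>z\<in>X. periodic z \<and> right_asym x0 z)" using nP by (auto simp: mem_class)
  obtain tM where tM: "tM \<in> special_times X x0" "\<forall>t'\<in>special_times X x0. t' \<le> tM" using special_times_has_max[OF ss fin_special x0 t0 nz] by blast
  define b where "b = ray x0 tM"
  have b_special: "b \<in> special_rays X" using tM by (simp add: special_times_def b_def)
  have "ray (shift_by tM x0) 0 = b" by (simp add: ray_shift_by b_def)
  hence b_class: "b \<in> class_rays" using b_special class_shift_by[OF x0_class, of tM] unfolding class_special_rays_def by blast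
  have "seq_drop j b \<notin> special_rays X" if "1 \<le> j" for j
  proof
    assume "seq_drop j b \<in> special_rays X"
    hence "tM + int j \<in> special_times X x0" by (simp add: special_times_def b_def seq_drop_ray)
    thus False using tM that by force
  qed
  hence "b \<in> terminal_rays" using b_class by (auto simp: terminal_rays_def nonterminal_rays_def)
  thus ?thesis by blast
qed

lemma card_le_1_and_finite: "(\<And>a b. a \<in> S \<Longrightarrow> b \<in> S \<Longrightarrow> a = b) \<Longrightarrow> card S \<le> 1 \<and> finite S"
  by (metis card_le_Suc0_iff_eq One_nat_def finite_subset_induct' finite.emptyI finite_insert subsetI insertCI
        is_singletonI' is_singleton_the_elem)

lemma card_periodic_orbits_le_1: "card periodic_orbits \<le> 1 \<and> finite periodic_orbits"
proof (rule card_le_1_and_finite)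
  fix a b assume "a \<in> periodic_orbits" "b \<in> periodic_orbits"
  then obtain x y where xy: "a = orbit x" "b = orbit y" "x \<in> C" "y \<in> C" "periodic x" "periodic y"
    by (auto simp: periodic_orbits_def)
  then obtain n where "y = shift_by n x" using periodic_same_orbit by blast
  then show "a = b" using xy by (auto simp: orbit_eq_iff)
qed

lemma card_plain_orbits_le_1: "card plain_orbits \<le> 1 \<and> finite plain_orbits"
proof (rule card_le_1_and_finite)
  fix a b assume "a \<in> plain_orbits" "b \<in> plain_orbits"
  then obtain x y where xy: "a = orbit x" "b = orbit y" "x \<in> C" "y \<in> C" "special_times X x = {}"
    by (auto simp: plain_orbits_def)
  then obtain n where "y = shift_by n x" using plain_same_orbit by blast
  then show "a = b" using xy by (auto simp: orbit_eq_iff)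
qed

lemma card_terminal_rays_le_1: "card terminal_rays \<le> 1 \<and> finite terminal_rays"
  by (rule card_le_1_and_finite) (auto dest: terminal_rays_unique)

lemma card_eq_1_if_le_1: "card S \<le> 1 \<and> finite S \<Longrightarrow> S \<noteq> {} \<Longrightarrow> card S = 1"
  by (simp add: card_gt_0_iff le_antisym Suc_le_eq)

lemma one_base_orbit: "card periodic_orbits + card plain_orbits + card terminal_rays = 1"
proof (cases "\<exists>x\<in>C. \<not> periodic x \<and> special_times X x = {}")
  case True
  then obtain x where x: "x \<in> C" "\<not> periodic x" "special_times X x = {}" by blast
  have "\<not> periodic z" if "z \<in> C" for z
    using plain_same_orbit[OF x(1) x(3) that] x(2) by (auto simp: periodic_shift_by)
  then have "periodic_orbits = {}" by (auto simp: periodic_orbits_def)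
  moreover have "card plain_orbits = 1"
    using x card_plain_orbits_le_1 by (intro card_eq_1_if_le_1) (auto simp: plain_orbits_def)
  moreover have "terminal_rays = {}"
    using plain_class_rays_empty[OF x(1) x(3)] by (simp add: terminal_rays_def)
  ultimately show ?thesis by simp
next
  case False
  then have plain: "plain_orbits = {}" by (auto simp: plain_orbits_def)
  show ?thesis
  proof (cases "\<exists>z\<in>C. periodic z")
    case True
    then obtain z where z: "z \<in> C" "periodic z" by blast
    then have "card periodic_orbits = 1"
      using card_periodic_orbits_le_1 by (intro card_eq_1_if_le_1) (auto simp: periodic_orbits_def)
    then show ?thesis using periodic_terminal_empty[OF z] plain by simp
  next
    case no_periodic: False
    then have "card terminal_rays = 1"
      using card_terminal_rays_le_1 terminal_rays_nonempty False by (intro card_eq_1_if_le_1) auto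
    moreover have "periodic_orbits = {}" using no_periodic by (auto simp: periodic_orbits_def)
    ultimately show ?thesis using plain by simp
  qed
qed

lemma card_orbits_class:
  shows "finite (orbit ` C)" and "card (orbit ` C) = 1 + (\<Sum>b\<in>class_rays. card (ray_left_ext X b) - 1)"
proof -
  have split: "orbit ` C = periodic_orbits \<union> plain_orbits \<union> special_orbits"
  proof
    show "orbit ` C \<subseteq> periodic_orbits \<union> plain_orbits \<union> special_orbits"
    proof
      fix o' assume "o' \<in> orbit ` C"
      then obtain x where x: "x \<in> C" "o' = orbit x" by blast
      show "o' \<in> periodic_orbits \<union> plain_orbits \<union> special_orbits"
      proof (cases "periodic x")
        case True then show ?thesis using x by (auto simp: periodic_orbits_def)
      next
        case False
        show ?thesis
        proof (cases "special_times X x = {}")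
          case True then show ?thesis using x False by (auto simp: plain_orbits_def)
        next
          case F2: False then show ?thesis using x False by (auto simp: special_orbits_def special_pts_def)
        qed
      qed
    qed
  qed (auto simp: periodic_orbits_def plain_orbits_def special_orbits_def special_pts_def)
  have disjoint: "periodic_orbits \<inter> plain_orbits = {}" "periodic_orbits \<inter> special_orbits = {}" "plain_orbits \<inter> special_orbits = {}"
    by (auto simp: periodic_orbits_def plain_orbits_def special_orbits_def special_pts_def orbit_eq_iff periodic_shift_by special_times_shift_by)
  show fin: "finite (orbit ` C)" using split card_periodic_orbits_le_1 card_plain_orbits_le_1 finite_special_orbits by simp
  have c: "card (orbit ` C) = card periodic_orbits + card plain_orbits + card special_orbits"
    unfolding split using card_periodic_orbits_le_1 card_plain_orbits_le_1 finite_special_orbits disjoint by (simp add: card_Un_disjoint Int_Un_distrib2)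
  have card_pairs: "card ext_pairs = (\<Sum>b\<in>class_rays. card (ray_left_ext X b))" unfolding ext_pairs_def by (rule card_SigmaI) (auto simp: finite_class_rays)
  have first_pairs_subset: "first_ext_pairs \<subseteq> ext_pairs" by (auto simp: first_ext_pairs_def)
  have card_pairs_split: "card ext_pairs = card first_ext_pairs + card (ext_pairs - first_ext_pairs)"
    using card_Diff_subset[OF finite_subset[OF first_pairs_subset finite_ext_pairs] first_pairs_subset] card_mono[OF finite_ext_pairs first_pairs_subset] by simp
  have card_rays_split: "card class_rays = card nonterminal_rays + card terminal_rays"
  proof -
    have "nonterminal_rays \<subseteq> class_rays" by (auto simp: nonterminal_rays_def)
    thus ?thesis using card_Diff_subset[OF finite_subset[OF _ finite_class_rays]] card_mono[OF finite_class_rays] by (simp add: terminal_rays_def)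
  qed
  have sum_split: "(\<Sum>b\<in>class_rays. card (ray_left_ext X b) - 1) + card class_rays = (\<Sum>b\<in>class_rays. card (ray_left_ext X b))"
    by (rule sum_diff_1_add_card) (auto dest!: class_rays_special simp: special_rays_def)
  show "card (orbit ` C) = 1 + (\<Sum>b\<in>class_rays. card (ray_left_ext X b) - 1)"
    using c one_base_orbit card_special_orbits card_pairs card_pairs_split card_ext_pairs_diff card_rays_split sum_split by linarith
qed

end

lemma card_orbits_asym_eqclass:
  fixes X :: "(int \<Rightarrow> 'a::finite) set"
  assumes ss: "is_shift_space X" and fin_special: "finite (special_rays X)" and x: "x \<in> X"
  shows "finite (orbit ` asym_eqclass X x)"
    and "card (orbit ` asym_eqclass X x) = 1 + (\<Sum>b\<in>class_special_rays X x. card (ray_left_ext X b) - 1)"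
proof -
  interpret asym_class X x using ss fin_special x by unfold_locales
  show "finite (orbit ` asym_eqclass X x)" using card_orbits_class(1) .
  show "card (orbit ` asym_eqclass X x) = 1 + (\<Sum>b\<in>class_special_rays X x. card (ray_left_ext X b) - 1)"
    by (rule card_orbits_class(2))
qed

lemma asym_eqclass_eq_iff:
  assumes "x \<in> X" "x' \<in> X"
  shows "asym_eqclass X x = asym_eqclass X x' \<longleftrightarrow> right_asym x x'"
proof
  assume "asym_eqclass X x = asym_eqclass X x'"
  moreover have "x' \<in> asym_eqclass X x'" using assms right_asym_refl by (simp add: asym_eqclass_def)
  ultimately have "x' \<in> asym_eqclass X x" by simp
  then show "right_asym x x'" by (simp add: asym_eqclass_def)
next
  assume r: "right_asym x x'"
  have "right_asym x y \<longleftrightarrow> right_asym x' y" for y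
    using right_asym_trans[OF r] right_asym_trans[OF right_asym_sym[OF r]] by blast
  then show "asym_eqclass X x = asym_eqclass X x'" by (simp add: asym_eqclass_def)
qed

lemma mem_class_special_rays_iff:
  assumes x: "x \<in> X" and y: "y \<in> X" "ray y 0 = b" and b: "b \<in> special_rays X"
  shows "b \<in> class_special_rays X x \<longleftrightarrow> asym_eqclass X y = asym_eqclass X x"
proof
  assume "b \<in> class_special_rays X x"
  then obtain z where z: "z \<in> asym_eqclass X x" "ray z 0 = b" by (auto simp: class_special_rays_def)
  have "right_asym z y" unfolding right_asym_ray using z(2) y(2) by (intro exI[of _ 0]) simp
  then have "right_asym x y" using z(1) right_asym_trans by (auto simp: asym_eqclass_def)
  then show "asym_eqclass X y = asym_eqclass X x" using asym_eqclass_eq_iff[OF x y(1)] by simp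
next
  assume "asym_eqclass X y = asym_eqclass X x"
  moreover have "y \<in> asym_eqclass X y" using y(1) right_asym_refl by (simp add: asym_eqclass_def)
  ultimately show "b \<in> class_special_rays X x" using y(2) b by (auto simp: class_special_rays_def)
qed

lemma card_image_ge_2_iff:
  assumes "finite (f ` S)"
  shows "2 \<le> card (f ` S) \<longleftrightarrow> (\<exists>y\<in>S. \<exists>z\<in>S. f y \<noteq> f z)"
proof
  assume "2 \<le> card (f ` S)"
  then show "\<exists>y\<in>S. \<exists>z\<in>S. f y \<noteq> f z" using card_le_Suc0_iff_eq[OF assms] by force
next
  assume "\<exists>y\<in>S. \<exists>z\<in>S. f y \<noteq> f z"
  then obtain y z where "y \<in> S" "z \<in> S" "f y \<noteq> f z" by blast
  then show "2 \<le> card (f ` S)" using card_mono[OF assms, of "{f y, f z}"] by auto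
qed

lemma asym_eqclass_in_asym_classes_iff:
  fixes X :: "(int \<Rightarrow> 'a::finite) set"
  assumes ss: "is_shift_space X" and fin_special: "finite (special_rays X)" and x: "x \<in> X"
  shows "asym_eqclass X x \<in> asym_classes X \<longleftrightarrow> class_special_rays X x \<noteq> {}"
proof -
  have fin: "finite (class_special_rays X x)"
    using fin_special by (rule finite_subset[rotated]) (auto simp: class_special_rays_def)
  have "asym_eqclass X x \<in> asym_classes X \<longleftrightarrow>
      (\<exists>y\<in>asym_eqclass X x. \<exists>z\<in>asym_eqclass X x. orbit y \<noteq> orbit z)"
    using x by (auto simp: asym_classes_def)
  also have "\<dots> \<longleftrightarrow> 2 \<le> card (orbit ` asym_eqclass X x)"
    using card_image_ge_2_iff[OF card_orbits_asym_eqclass(1)[OF ss fin_special x]] by simp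
  also have "\<dots> \<longleftrightarrow> 1 \<le> (\<Sum>b\<in>class_special_rays X x. card (ray_left_ext X b) - 1)"
    using card_orbits_asym_eqclass(2)[OF ss fin_special x] by simp
  also have "\<dots> \<longleftrightarrow> class_special_rays X x \<noteq> {}"
  proof
    assume "class_special_rays X x \<noteq> {}"
    then obtain b where b: "b \<in> class_special_rays X x" by blast
    then have "1 \<le> card (ray_left_ext X b) - 1" by (auto simp: class_special_rays_def special_rays_def)
    also have "\<dots> \<le> (\<Sum>b\<in>class_special_rays X x. card (ray_left_ext X b) - 1)"
      by (rule member_le_sum[OF b _ fin]) simp
    finally show "1 \<le> (\<Sum>b\<in>class_special_rays X x. card (ray_left_ext X b) - 1)" .
  qed auto
  finally show ?thesis .
qed

lemma omega_eq_special_rays_sum: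
  fixes X :: "(int \<Rightarrow> 'a::finite) set"
  assumes ss: "is_shift_space X" and fin_special: "finite (special_rays X)"
  shows "omega X = enat (\<Sum>u\<in>special_rays X. card (ray_left_ext X u) - 1)"
proof -
  let ?B = "special_rays X"
  define pt where "pt b = (SOME y. y \<in> X \<and> ray y 0 = b)" for b
  have pt: "pt b \<in> X \<and> ray (pt b) 0 = b" if "b \<in> ?B" for b
  proof -
    have "\<exists>y. y \<in> X \<and> ray y 0 = b" using ray_realised[OF ss] that by (auto simp: special_rays_def)
    then show ?thesis unfolding pt_def by (rule someI_ex)
  qed
  define cl where "cl b = asym_eqclass X (pt b)" for b
  have class_rays_eq: "class_special_rays X x = {b\<in>?B. cl b = asym_eqclass X x}" if "x \<in> X" for x
  proof (intro set_eqI iffI)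
    fix b assume b: "b \<in> class_special_rays X x"
    then have "b \<in> ?B" by (simp add: class_special_rays_def)
    then show "b \<in> {b\<in>?B. cl b = asym_eqclass X x}"
      using b mem_class_special_rays_iff[OF that, of "pt b" b] pt by (simp add: cl_def)
  next
    fix b assume "b \<in> {b\<in>?B. cl b = asym_eqclass X x}"
    then show "b \<in> class_special_rays X x"
      using mem_class_special_rays_iff[OF that, of "pt b" b] pt by (simp add: cl_def)
  qed
  have classes: "asym_classes X = cl ` ?B"
  proof (intro set_eqI iffI)
    fix C assume C: "C \<in> asym_classes X"
    then obtain x where x: "x \<in> X" "C = asym_eqclass X x" by (auto simp: asym_classes_def)
    then obtain b where "b \<in> class_special_rays X x"
      using C asym_eqclass_in_asym_classes_iff[OF ss fin_special] by blast
    then show "C \<in> cl ` ?B" using class_rays_eq[OF x(1)] x(2) by auto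
  next
    fix C assume "C \<in> cl ` ?B"
    then obtain b where b: "b \<in> ?B" "C = cl b" by blast
    then have "b \<in> class_special_rays X (pt b)" using class_rays_eq pt by (simp add: cl_def)
    then show "C \<in> asym_classes X"
      using asym_eqclass_in_asym_classes_iff[OF ss fin_special] pt b by (auto simp: cl_def)
  qed
  have orbits: "card (orbits_in C) - 1 = (\<Sum>b\<in>{b\<in>?B. cl b = C}. card (ray_left_ext X b) - 1)"
    and fin_orbits: "finite (orbits_in C)" if C: "C \<in> cl ` ?B" for C
  proof -
    obtain b where b: "b \<in> ?B" "C = cl b" using C by blast
    show "card (orbits_in C) - 1 = (\<Sum>b\<in>{b\<in>?B. cl b = C}. card (ray_left_ext X b) - 1)"
      "finite (orbits_in C)"
      using card_orbits_asym_eqclass[OF ss fin_special] class_rays_eq pt b by (auto simp: orbits_in_def cl_def)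
  qed
  have "(\<Sum>C\<in>asym_classes X. card (orbits_in C) - 1)
      = (\<Sum>C\<in>cl ` ?B. \<Sum>b\<in>{b\<in>?B. cl b = C}. card (ray_left_ext X b) - 1)"
    unfolding classes by (rule sum.cong[OF refl orbits(1)])
  also have "\<dots> = (\<Sum>u\<in>?B. card (ray_left_ext X u) - 1)"
    by (rule sum.image_gen[OF fin_special, symmetric])
  finally have "(\<Sum>C\<in>asym_classes X. card (orbits_in C) - 1) = (\<Sum>u\<in>?B. card (ray_left_ext X u) - 1)" .
  then show ?thesis using classes fin_orbits fin_special by (simp add: omega_def)
qed

section \<open>Eventually dendric shift spaces\<close>

lemma left_ext_snoc_subset: "left_ext X (w @ [b]) \<subseteq> left_ext X w"
  using lang_prefix[of "_ # w" "[b]" X] by (auto simp: left_ext_def)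

lemma seq_through_extensions:
  assumes w: "Q w" and step: "\<And>v. Q v \<Longrightarrow> \<exists>b. Q (v @ [b])"
  obtains u where "\<And>k. Q (seq_prefix (length w + k) u)" and "seq_prefix (length w) u = w"
proof -
  define ws where "ws = rec_nat w (\<lambda>k v. v @ [SOME b. Q (v @ [b])])"
  have ws0: "ws 0 = w" and wsS: "\<And>k. ws (Suc k) = ws k @ [SOME b. Q (ws k @ [b])]"
    by (simp_all add: ws_def)
  have Qk: "Q (ws k)" for k
  proof (induction k)
    case (Suc k)
    then show ?case using someI_ex[OF step[OF Suc]] by (simp add: wsS)
  qed (simp add: w ws0)
  have len: "length (ws k) = length w + k" for k by (induction k) (auto simp: ws0 wsS)
  have stable: "ws (k + j) ! i = ws k ! i" if "i < length w + k" for k j i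
    using that by (induction j) (auto simp: wsS nth_append len)
  define u where "u i = ws (Suc i) ! i" for i
  have prefix: "seq_prefix (length w + k) u = ws k" for k
  proof (rule nth_equalityI)
    fix i assume "i < length (seq_prefix (length w + k) u)"
    then have i: "i < length w + k" by simp
    have "ws (Suc i + k) ! i = ws (Suc i) ! i" using stable[of i "Suc i" k] by simp
    moreover have "ws (k + Suc i) ! i = ws k ! i" using stable[of i k "Suc i", OF i] .
    ultimately show "seq_prefix (length w + k) u ! i = ws k ! i" using i by (simp add: u_def add.commute)
  qed (simp add: len)
  show ?thesis by (rule that) (use Qk prefix[of 0] ws0 in \<open>simp_all add: prefix\<close>)
qed

lemma left_special_snoc:
  fixes X :: "(int \<Rightarrow> 'a::finite) set"
  assumes conserved: "(\<Sum>b\<in>right_ext X v. card (left_ext X (v @ [b])) - 1) = card (left_ext X v) - 1"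
    and special: "2 \<le> card (left_ext X v)"
  shows "\<exists>b. v @ [b] \<in> lang X \<and> 2 \<le> card (left_ext X (v @ [b]))"
proof (rule ccontr)
  assume "\<nexists>b. v @ [b] \<in> lang X \<and> 2 \<le> card (left_ext X (v @ [b]))"
  then have "card (left_ext X (v @ [b])) - 1 = 0" if "b \<in> right_ext X v" for b
    using that by (auto simp: right_ext_def)
  then show False using conserved special by simp
qed

lemma left_special_word_extends:
  fixes X :: "(int \<Rightarrow> 'a::finite) set"
  assumes conserved: "\<And>v. v \<in> lang X \<Longrightarrow> length v \<ge> m \<Longrightarrow>
      (\<Sum>b\<in>right_ext X v. card (left_ext X (v @ [b])) - 1) = card (left_ext X v) - 1"
    and w: "w \<in> lang X" "length w = n" "n \<ge> m" "card (left_ext X w) \<ge> 2"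
  shows "\<exists>u. u \<in> special_rays X \<and> seq_prefix n u = w"
proof -
  define Q where "Q v \<longleftrightarrow> v \<in> lang X \<and> length v \<ge> m \<and> card (left_ext X v) \<ge> 2" for v
  have "\<exists>b. Q (v @ [b])" if "Q v" for v
    using left_special_snoc[OF conserved] that by (auto simp: Q_def)
  then obtain u where Qu: "\<And>k. Q (seq_prefix (n + k) u)" and wu: "seq_prefix n u = w"
    using seq_through_extensions[of Q w] w by (auto simp: Q_def)
  have "seq_prefix k u \<in> lang X" for k
  proof -
    have "take k (seq_prefix (n + k) u) \<in> lang X" using Qu[of k] by (simp add: Q_def lang_take)
    then show ?thesis by (simp add: take_seq_prefix)
  qed
  then have ray: "is_ray X u" by (simp add: is_ray_def)
  obtain N where N: "\<And>k. k \<ge> N \<Longrightarrow> left_ext X (seq_prefix k u) = ray_left_ext X u"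
    using left_ext_seq_prefix_eventually by blast
  then have "card (ray_left_ext X u) \<ge> 2" using Qu[of N] by (simp add: Q_def)
  then show ?thesis using ray wu by (auto simp: special_rays_def)
qed

lemma left_excess_Suc_eq:
  fixes X :: "(int \<Rightarrow> 'a::finite) set"
  assumes "\<And>w. w \<in> lang_n X n \<Longrightarrow> is_tree (ext_vertices X w) (ext_adj X w)"
  shows "left_excess X (Suc n) = left_excess X n"
proof -
  have "left_excess X (Suc n) = (\<Sum>w\<in>lang_n X n. \<Sum>b\<in>right_ext X w. card (left_ext X (w @ [b])) - 1)"
    by (rule left_excess_Suc)
  also have "\<dots> = left_excess X n"
    unfolding left_excess_def
  proof (rule sum.cong[OF refl])
    fix w assume "w \<in> lang_n X n"
    then show "(\<Sum>b\<in>right_ext X w. card (left_ext X (w @ [b])) - 1) = card (left_ext X w) - 1"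
      using assms by (intro tree_left_excess_conserved) (auto simp: lang_n_def)
  qed
  finally show ?thesis .
qed

lemma left_excess_eq_special_sum_iff:
  fixes X :: "(int \<Rightarrow> 'a::finite) set"
  assumes fin: "finite (special_rays X)" and inj: "inj_on (seq_prefix n) (special_rays X)"
    and stable: "\<forall>u\<in>special_rays X. left_ext X (seq_prefix n u) = ray_left_ext X u"
  shows "left_excess X n = (\<Sum>u\<in>special_rays X. card (ray_left_ext X u) - 1) \<longleftrightarrow>
    (\<forall>w\<in>lang_n X n. 2 \<le> card (left_ext X w) \<longrightarrow> w \<in> seq_prefix n ` special_rays X)"
proof -
  have "left_excess X n = (\<Sum>u\<in>special_rays X. card (ray_left_ext X u) - 1)
      + (\<Sum>w\<in>lang_n X n - seq_prefix n ` special_rays X. card (left_ext X w) - 1)"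
    using inj stable by (intro left_excess_split[OF fin]) (auto simp: special_rays_def)
  moreover have "(\<Sum>w\<in>lang_n X n - seq_prefix n ` special_rays X. card (left_ext X w) - 1) = 0 \<longleftrightarrow>
      (\<forall>w\<in>lang_n X n. 2 \<le> card (left_ext X w) \<longrightarrow> w \<in> seq_prefix n ` special_rays X)"
    unfolding sum_eq_0_iff[OF finite_Diff[OF finite_lang_n]] by (auto simp: not_less_eq_eq[symmetric] numeral_2_eq_2)
  ultimately show ?thesis by linarith
qed

lemma eventually_left_excess_eq_special_sum:
  fixes X :: "(int \<Rightarrow> 'a::finite) set"
  assumes "eventually_dendric X"
  shows "finite (special_rays X)"
    and "\<exists>N. \<forall>n\<ge>N. left_excess X n = (\<Sum>u\<in>special_rays X. card (ray_left_ext X u) - 1)"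
proof -
  obtain m where tree: "\<And>w. w \<in> lang X \<Longrightarrow> m \<le> length w \<Longrightarrow> is_tree (ext_vertices X w) (ext_adj X w)"
    using assms by (auto simp: eventually_dendric_def)
  have "left_excess X n = left_excess X m" if "m \<le> n" for n
    using that
  proof (induction n rule: nat_induct_at_least)
    case (Suc n)
    have "left_excess X (Suc n) = left_excess X n"
      using Suc.hyps(1) by (intro left_excess_Suc_eq tree) (auto simp: lang_n_def)
    with Suc.IH show ?case by simp
  qed simp
  then show fin: "finite (special_rays X)"
    by (rule special_rays_bounded(1))
  obtain N where N: "\<And>n. N \<le> n \<Longrightarrow> inj_on (seq_prefix n) (special_rays X)
      \<and> (\<forall>u\<in>special_rays X. left_ext X (seq_prefix n u) = ray_left_ext X u)"
    using eventually_seq_prefix_inj_stable[OF fin] by blast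
  have "left_excess X n = (\<Sum>u\<in>special_rays X. card (ray_left_ext X u) - 1)" if n: "max m N \<le> n" for n
  proof -
    have "w \<in> seq_prefix n ` special_rays X" if w: "w \<in> lang_n X n" "2 \<le> card (left_ext X w)" for w
    proof -
      obtain u where "u \<in> special_rays X" "seq_prefix n u = w"
        using left_special_word_extends[where m = m, OF tree_left_excess_conserved[OF _ tree]] n w
        by (auto simp: lang_n_def)
      then show ?thesis by blast
    qed
    moreover have "N \<le> n" using n by simp
    ultimately show ?thesis using left_excess_eq_special_sum_iff[OF fin] N by blast
  qed
  then show "\<exists>N. \<forall>n\<ge>N. left_excess X n = (\<Sum>u\<in>special_rays X. card (ray_left_ext X u) - 1)"
    by blast
qed

lemma card_left_ext_eq_1:
  fixes X :: "(int \<Rightarrow> 'a::finite) set"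
  assumes "w \<in> lang X" and "\<not> 2 \<le> card (left_ext X w)"
  shows "card (left_ext X w) = 1"
proof -
  have "0 < card (left_ext X w)" using left_ext_ne[OF assms(1)] by (simp add: card_gt_0_iff)
  with assms(2) show ?thesis by linarith
qed

text \<open>Beyond the threshold, a left special word w is the prefix of a unique left special ray u,
  and all its left extensions extend w u_n; every other right extension b of w has a unique
  left extension. So the extension graph of w is a star around u_n with pendant edges.\<close>

lemma ext_graph_star:
  fixes X :: "(int \<Rightarrow> 'a::finite) set"
  assumes stable: "\<And>n. m \<le> n \<Longrightarrow> inj_on (seq_prefix n) (special_rays X)
      \<and> (\<forall>u\<in>special_rays X. left_ext X (seq_prefix n u) = ray_left_ext X u)"
    and prefixes: "\<And>n w. m \<le> n \<Longrightarrow> w \<in> lang_n X n \<Longrightarrow> 2 \<le> card (left_ext X w)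
      \<Longrightarrow> w \<in> seq_prefix n ` special_rays X"
    and w: "w \<in> lang X" "m \<le> length w"
  obtains b0 where "b0 \<in> right_ext X w" and "left_ext X (w @ [b0]) = left_ext X w"
    and "\<And>b. b \<in> right_ext X w \<Longrightarrow> b \<noteq> b0 \<Longrightarrow> card (left_ext X (w @ [b])) = 1"
proof (cases "2 \<le> card (left_ext X w)")
  case True
  define n where "n = length w"
  have stable_n: "m \<le> n" "m \<le> Suc n" using w by (auto simp: n_def)
  have "w \<in> seq_prefix n ` special_rays X"
    using prefixes[OF stable_n(1)] True w by (simp add: n_def lang_n_def)
  then obtain u where u: "u \<in> special_rays X" "seq_prefix n u = w" by blast
  have snoc: "seq_prefix (Suc n) u = w @ [u n]" using u by (simp add: seq_prefix_Suc)
  show ?thesis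
  proof (rule that[of "u n"])
    have "seq_prefix (Suc n) u \<in> lang X" using u(1) by (simp add: special_rays_def is_ray_def)
    then show "u n \<in> right_ext X w" by (simp add: snoc right_ext_def)
    have "left_ext X (seq_prefix (Suc n) u) = left_ext X (seq_prefix n u)"
      using stable[OF stable_n(1)] stable[OF stable_n(2)] u(1) by simp
    then show "left_ext X (w @ [u n]) = left_ext X w" by (simp add: snoc u(2))
    fix b assume b: "b \<in> right_ext X w" "b \<noteq> u n"
    then have wb: "w @ [b] \<in> lang X" by (simp add: right_ext_def)
    have "\<not> 2 \<le> card (left_ext X (w @ [b]))"
    proof
      assume "2 \<le> card (left_ext X (w @ [b]))"
      then have "w @ [b] \<in> seq_prefix (Suc n) ` special_rays X"
        using prefixes[OF stable_n(2)] wb by (simp add: lang_n_def n_def)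
      then obtain u' where u': "u' \<in> special_rays X" "seq_prefix (Suc n) u' = w @ [b]" by auto
      then have "seq_prefix n u' = seq_prefix n u" using u(2) by (simp add: seq_prefix_Suc)
      then have "u' = u" by (rule inj_onD[OF conjunct1[OF stable[OF stable_n(1)]] _ u'(1) u(1)])
      then show False using u' snoc b(2) by simp
    qed
    then show "card (left_ext X (w @ [b])) = 1" by (rule card_left_ext_eq_1[OF wb])
  qed
next
  case False
  then obtain a0 where a0: "left_ext X w = {a0}"
    using card_left_ext_eq_1[OF w(1)] by (metis card_1_singletonE)
  have "left_ext X (w @ [b]) = {a0}" if "b \<in> right_ext X w" for b
    using left_ext_snoc_subset[of X w b] left_ext_ne[of "w @ [b]" X] that a0
    by (auto simp: right_ext_def)
  moreover obtain b0 where "b0 \<in> right_ext X w" using right_ext_ne[OF w(1)] by blast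
  ultimately show ?thesis using that a0 by auto
qed

lemma ext_graph_is_tree_if_star:
  fixes X :: "(int \<Rightarrow> 'a::finite) set"
  assumes w: "w \<in> lang X" and b0: "b0 \<in> right_ext X w"
    and center: "left_ext X (w @ [b0]) = left_ext X w"
    and pendant: "\<And>b. b \<in> right_ext X w \<Longrightarrow> b \<noteq> b0 \<Longrightarrow> card (left_ext X (w @ [b])) = 1"
  shows "is_tree (ext_vertices X w) (ext_adj X w)"
  unfolding ext_vertices_def
proof (rule is_tree_star[where E = "\<lambda>a b. a \<in> left_ext X (w @ [b])"])
  show "left_ext X w \<noteq> {}" by (rule left_ext_ne[OF w])
  fix a b assume "a \<in> left_ext X (w @ [b])"
  then show "a \<in> left_ext X w \<and> b \<in> right_ext X w"
    using lang_prefix[of "a # w" "[b]" X] lang_suffix[of "[a]" "w @ [b]" X]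
    by (simp add: left_ext_def right_ext_def)
next
  fix b assume "b \<in> right_ext X w" "b \<noteq> b0"
  then show "\<exists>!a. a \<in> left_ext X (w @ [b])" using pendant by (metis card_1_singletonE singleton_iff)
qed (use b0 center in \<open>auto simp: left_ext_def\<close>)

lemma eventually_dendric_if_left_excess_eq_special_sum:
  fixes X :: "(int \<Rightarrow> 'a::finite) set"
  assumes fin: "finite (special_rays X)"
    and eq: "\<And>n. N \<le> n \<Longrightarrow> left_excess X n = (\<Sum>u\<in>special_rays X. card (ray_left_ext X u) - 1)"
  shows "eventually_dendric X"
proof -
  obtain N' where N': "\<And>n. N' \<le> n \<Longrightarrow> inj_on (seq_prefix n) (special_rays X)
      \<and> (\<forall>u\<in>special_rays X. left_ext X (seq_prefix n u) = ray_left_ext X u)"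
    using eventually_seq_prefix_inj_stable[OF fin] by blast
  define m where "m = max N N'"
  have stable: "\<And>n. m \<le> n \<Longrightarrow> inj_on (seq_prefix n) (special_rays X)
      \<and> (\<forall>u\<in>special_rays X. left_ext X (seq_prefix n u) = ray_left_ext X u)"
    using N' by (simp add: m_def)
  have prefixes: "w \<in> seq_prefix n ` special_rays X"
    if "m \<le> n" "w \<in> lang_n X n" "2 \<le> card (left_ext X w)" for n w
  proof -
    have "N \<le> n" using that(1) by (simp add: m_def)
    then have "\<forall>w\<in>lang_n X n. 2 \<le> card (left_ext X w) \<longrightarrow> w \<in> seq_prefix n ` special_rays X"
      using left_excess_eq_special_sum_iff[OF fin] stable[OF that(1)] eq by blast
    then show ?thesis using that(2,3) by blast
  qed
  have "is_tree (ext_vertices X w) (ext_adj X w)" if w: "w \<in> lang X" "m \<le> length w" for w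
  proof -
    obtain b0 where "b0 \<in> right_ext X w" "left_ext X (w @ [b0]) = left_ext X w"
      "\<And>b. b \<in> right_ext X w \<Longrightarrow> b \<noteq> b0 \<Longrightarrow> card (left_ext X (w @ [b])) = 1"
      using ext_graph_star[OF stable prefixes w] by blast
    then show ?thesis by (rule ext_graph_is_tree_if_star[OF w(1)])
  qed
  then show ?thesis by (auto simp: eventually_dendric_def)
qed

lemma eventually_dendric_iff_left_excess_const:
  fixes X :: "(int \<Rightarrow> 'a::finite) set"
  assumes "is_shift_space X"
  shows "eventually_dendric X \<longleftrightarrow> (\<exists>N c. (\<forall>n\<ge>N. left_excess X n = c) \<and> omega X = enat c)"
proof
  assume dendric: "eventually_dendric X"
  then have "finite (special_rays X)" by (rule eventually_left_excess_eq_special_sum(1))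
  then show "\<exists>N c. (\<forall>n\<ge>N. left_excess X n = c) \<and> omega X = enat c"
    using eventually_left_excess_eq_special_sum(2)[OF dendric] omega_eq_special_rays_sum[OF assms]
    by blast
next
  assume "\<exists>N c. (\<forall>n\<ge>N. left_excess X n = c) \<and> omega X = enat c"
  then obtain N c where c: "\<And>n. n \<ge> N \<Longrightarrow> left_excess X n = c" and omega: "omega X = enat c"
    by blast
  have fin: "finite (special_rays X)" using c by (rule special_rays_bounded(1))
  then have "c = (\<Sum>u\<in>special_rays X. card (ray_left_ext X u) - 1)"
    using omega omega_eq_special_rays_sum[OF assms] by simp
  then show "eventually_dendric X"
    using c by (intro eventually_dendric_if_left_excess_eq_special_sum[OF fin]) simp
qed

lemma tendsto_eventually_const_iff:
  fixes f :: "nat \<Rightarrow> 'b::t2_space"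
  assumes "\<And>n. N \<le> n \<Longrightarrow> f n = c"
  shows "f \<longlonglongrightarrow> L \<longleftrightarrow> L = c"
proof -
  have "f \<longlonglongrightarrow> c" using assms by (intro tendsto_eventually) (auto simp: eventually_sequentially)
  then show ?thesis using LIMSEQ_unique by auto
qed

lemma ereal_of_enat_eq_iff: "ereal_of_enat m = ereal_of_enat n \<longleftrightarrow> m = n"
  by (simp add: order_eq_iff)

theorem mainTheorem6:
  fixes X :: "(int \<Rightarrow> 'a::finite) set"
  assumes "is_shift_space X"
  shows "eventually_dendric X \<longleftrightarrow>
           ((\<exists>N c. \<forall>n\<ge>N. s_cplx X n = c)
            \<and> (\<lambda>n. ereal (real_of_int (s_cplx X n))) \<longlonglongrightarrow> ereal_of_enat (omega X))"
    (is "_ \<longleftrightarrow> (\<exists>N c. \<forall>n\<ge>N. ?s n = c) \<and> ?lim")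
proof -
  have s: "\<And>n. ?s n = int (left_excess X n)" by (rule s_cplx_eq_left_excess)
  have "(\<exists>N c. \<forall>n\<ge>N. ?s n = c) \<and> ?lim \<longleftrightarrow> (\<exists>N c. (\<forall>n\<ge>N. left_excess X n = c) \<and> omega X = enat c)"
  proof
    assume "(\<exists>N c. \<forall>n\<ge>N. ?s n = c) \<and> ?lim"
    then obtain N c where c: "\<And>n. N \<le> n \<Longrightarrow> ?s n = c" and lim: ?lim by blast
    have const: "left_excess X n = left_excess X N" if "N \<le> n" for n
      using c[OF that] c[OF order_refl] by (simp add: s)
    have "?lim \<longleftrightarrow> ereal_of_enat (omega X) = ereal (real_of_int c)"
      by (rule tendsto_eventually_const_iff[of N]) (simp add: c)
    with lim have "ereal_of_enat (omega X) = ereal (real_of_int c)" by blast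
    then have "omega X = enat (left_excess X N)"
      using c[OF order_refl] ereal_of_enat_eq_iff[of "omega X" "enat (left_excess X N)"] by (simp add: s)
    then show "\<exists>N c. (\<forall>n\<ge>N. left_excess X n = c) \<and> omega X = enat c" using const by blast
  next
    assume "\<exists>N c. (\<forall>n\<ge>N. left_excess X n = c) \<and> omega X = enat c"
    then obtain N c where c: "\<And>n. N \<le> n \<Longrightarrow> ?s n = int c" and "omega X = enat c"
      by (auto simp: s)
    moreover have "?lim \<longleftrightarrow> ereal_of_enat (omega X) = ereal (real_of_int (int c))"
      by (rule tendsto_eventually_const_iff[of N]) (simp add: c)
    ultimately have ?lim by simp
    then show "(\<exists>N c. \<forall>n\<ge>N. ?s n = c) \<and> ?lim" using c by blast
  qed
  then show ?thesis using eventually_dendric_iff_left_excess_const[OF assms] by simp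
qed

end
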